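(* Let $G$ be a finite simple connected graph with at least one edge and $s\ge 0$. The vanishing ideal of the $s$-order principal component of $G$ is the edge ideal of the graph $PC_s(G)$ whose vertex set is $\{x^{(i)} : x\in V(G),\ 0\le i\le s\}$ and whose edge set is $\{\{x^{(i)},y^{(j)}\} : \{x,y\}\in E(G),\ 0\le i,j\le s\}$.
   Context: $R=k[x_1,\dots,x_n]$ over an algebraically closed field $k$, vertices of $G$ identified with variables; $\mathcal{J}_s(R)=k[x_i^{(l)} : 1\le i\le n,\ 0\le l\le s]$. The edge ideal of a graph $H$ on variables is $\langle uv : \{u,v\}\in E(H)\rangle$. The $s$-order principal component of $G$: with $X=\mathcal{V}(I(G))$, jet scheme $\mathcal{J}_s(X)=\mathcal{V}(\mathcal{J}_s(I(G)))\subseteq\mathbb{A}^{n(s+1)}$ (where $\mathcal{J}_s(I)$ is generated by the coefficients of $t^0,\dots,t^s$ of the generators of $I$ after substituting $x_i\mapsto\sum_{l=0}^s x_i^{(l)}t^l$ modulo $t^{s+1}$), and projection $\pi_s$ to the order-$0$ coordinates, it is the Zariski closure of $\pi_s^{-1}(X_{smooth})$, $X_{smooth}$ being the smooth locus of $X$. *)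

theory Defs
  imports "HOL-Library.Poly_Mapping" "HOL-Library.Function_Algebras"
          "HOL-Computational_Algebra.Polynomial"
begin

type_synonym ('x, 'k) mpoly = "('x \<Rightarrow>\<^sub>0 nat) \<Rightarrow>\<^sub>0 'k"

definition mp_eval_with :: "('k \<Rightarrow> 'b::comm_ring_1) \<Rightarrow> ('x, 'k::zero) mpoly \<Rightarrow> ('x \<Rightarrow> 'b) \<Rightarrow> 'b" where
  "mp_eval_with phi f a =
     (\<Sum>m\<in>Poly_Mapping.keys f. phi (Poly_Mapping.lookup f m) *
        (\<Prod>x\<in>Poly_Mapping.keys m. a x ^ Poly_Mapping.lookup m x))"

definition mp_eval :: "('x, 'k::comm_ring_1) mpoly \<Rightarrow> ('x \<Rightarrow> 'k) \<Rightarrow> 'k" where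
  "mp_eval f a = mp_eval_with (\<lambda>c. c) f a"

definition mp_vars :: "('x, 'k::zero) mpoly \<Rightarrow> 'x set" where
  "mp_vars f = (\<Union>m\<in>Poly_Mapping.keys f. Poly_Mapping.keys m)"

definition polys :: "'x set \<Rightarrow> ('x, 'k::zero) mpoly set" where
  "polys Vars = {f. mp_vars f \<subseteq> Vars}"

definition aff_space :: "'x set \<Rightarrow> ('x \<Rightarrow> 'k::zero) set" where
  "aff_space Vars = {a. \<forall>x. x \<notin> Vars \<longrightarrow> a x = 0}"

definition zero_set :: "'x set \<Rightarrow> ('x, 'k::comm_ring_1) mpoly set \<Rightarrow> ('x \<Rightarrow> 'k) set" where
  "zero_set Vars F = {a \<in> aff_space Vars. \<forall>f\<in>F. mp_eval f a = 0}"

definition vanishing_ideal :: "'x set \<Rightarrow> ('x \<Rightarrow> 'k::comm_ring_1) set \<Rightarrow> ('x, 'k) mpoly set" where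
  "vanishing_ideal Vars S = {f \<in> polys Vars. \<forall>a\<in>S. mp_eval f a = 0}"

definition zariski_closure :: "'x set \<Rightarrow> ('x \<Rightarrow> 'k::comm_ring_1) set \<Rightarrow> ('x \<Rightarrow> 'k) set" where
  "zariski_closure Vars S = zero_set Vars (vanishing_ideal Vars S)"

definition zariski_closed :: "'x set \<Rightarrow> ('x \<Rightarrow> 'k::comm_ring_1) set \<Rightarrow> bool" where
  "zariski_closed Vars Z \<longleftrightarrow> Z \<subseteq> aff_space Vars \<and> zariski_closure Vars Z = Z"

definition zariski_irreducible :: "'x set \<Rightarrow> ('x \<Rightarrow> 'k::comm_ring_1) set \<Rightarrow> bool" where
  "zariski_irreducible Vars Z \<longleftrightarrow> zariski_closed Vars Z \<and> Z \<noteq> {} \<and>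
     (\<forall>Z1 Z2. zariski_closed Vars Z1 \<and> zariski_closed Vars Z2 \<and> Z = Z1 \<union> Z2
        \<longrightarrow> Z1 = Z \<or> Z2 = Z)"

definition ideal_gen :: "'x set \<Rightarrow> ('x, 'k::comm_ring_1) mpoly set \<Rightarrow> ('x, 'k) mpoly set" where
  "ideal_gen Vars F = {f. \<exists>S c. finite S \<and> S \<subseteq> F \<and> (\<forall>g\<in>S. c g \<in> polys Vars) \<and>
                              f = (\<Sum>g\<in>S. c g * g)}"

definition local_dim :: "'x set \<Rightarrow> ('x \<Rightarrow> 'k::comm_ring_1) set \<Rightarrow> ('x \<Rightarrow> 'k) \<Rightarrow> nat" where
  "local_dim Vars X p = Sup {r. \<exists>Z :: nat \<Rightarrow> ('x \<Rightarrow> 'k) set.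
      p \<in> Z 0 \<and> (\<forall>i\<le>r. zariski_irreducible Vars (Z i) \<and> Z i \<subseteq> X) \<and>
      (\<forall>i<r. Z i \<subset> Z (Suc i))}"

(* Differential of f at p applied to the tangent vector w: the coefficient of t in
  f(p + t w) (first-order Taylor coefficient = sum of partial derivatives times w). *)
definition mp_differential :: "('x, 'k::comm_ring_1) mpoly \<Rightarrow> ('x \<Rightarrow> 'k) \<Rightarrow> ('x \<Rightarrow> 'k) \<Rightarrow> 'k" where
  "mp_differential f p w = coeff (mp_eval_with (\<lambda>c. [:c:]) f (\<lambda>x. [:p x, w x:])) 1"

definition tangent_space :: "'x set \<Rightarrow> ('x \<Rightarrow> 'k::comm_ring_1) set \<Rightarrow> ('x \<Rightarrow> 'k) \<Rightarrow> ('x \<Rightarrow> 'k) set" where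
  "tangent_space Vars X p = {w \<in> aff_space Vars.
      \<forall>f\<in>vanishing_ideal Vars X. mp_differential f p w = 0}"

definition smooth_locus :: "'x set \<Rightarrow> ('x \<Rightarrow> 'k::field) set \<Rightarrow> ('x \<Rightarrow> 'k) set" where
  "smooth_locus Vars X = {p \<in> X.
      vector_space.dim (\<lambda>c (w :: 'x \<Rightarrow> 'k). (\<lambda>x. c * w x)) (tangent_space Vars X p)
      = local_dim Vars X p}"

(* Jet variables x_i^(l), 0 <le> l <le> s, encoded as pairs (x_i, l). *)
definition jet_vars :: "nat \<Rightarrow> ('v \<times> nat) set" where
  "jet_vars s = {(v, l). l \<le> s}"

definition jet_arc :: "nat \<Rightarrow> ('v \<times> nat \<Rightarrow> 'k::comm_ring_1) \<Rightarrow> 'v \<Rightarrow> 'k poly" where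
  "jet_arc s a v = (\<Sum>l\<le>s. monom (a (v, l)) l)"

(* Jet scheme J_s(V(F)) = V(J_s(F)): the common zeros of the coefficients of
  t^0..t^s of the generators g <in> F after substituting the arc. *)
definition jet_scheme :: "nat \<Rightarrow> ('v, 'k::comm_ring_1) mpoly set \<Rightarrow> ('v \<times> nat \<Rightarrow> 'k) set" where
  "jet_scheme s F = {a \<in> aff_space (jet_vars s).
      \<forall>g\<in>F. \<forall>l\<le>s. coeff (mp_eval_with (\<lambda>c. [:c:]) g (jet_arc s a)) l = 0}"

definition jet_proj :: "('v \<times> nat \<Rightarrow> 'k) \<Rightarrow> 'v \<Rightarrow> 'k" where
  "jet_proj a = (\<lambda>v. a (v, 0))"

definition mp_xy :: "'x \<Rightarrow> 'x \<Rightarrow> ('x, 'k::comm_ring_1) mpoly" where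
  "mp_xy x y = Poly_Mapping.single (Poly_Mapping.single x 1 + Poly_Mapping.single y 1) 1"

definition edge_gens :: "('x \<Rightarrow> 'x \<Rightarrow> bool) \<Rightarrow> ('x, 'k::comm_ring_1) mpoly set" where
  "edge_gens E = {mp_xy x y | x y. E x y}"

definition principal_component :: "nat \<Rightarrow> ('v \<Rightarrow> 'v \<Rightarrow> bool) \<Rightarrow> ('v \<times> nat \<Rightarrow> 'k::field) set" where
  "principal_component s E =
     (let X = zero_set UNIV (edge_gens E :: ('v, 'k) mpoly set) in
      zariski_closure (jet_vars s)
        {a \<in> jet_scheme s (edge_gens E). jet_proj a \<in> smooth_locus UNIV X})"

definition PC_edges :: "nat \<Rightarrow> ('v \<Rightarrow> 'v \<Rightarrow> bool) \<Rightarrow> ('v \<times> nat) \<Rightarrow> ('v \<times> nat) \<Rightarrow> bool" where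
  "PC_edges s E = (\<lambda>(x, i) (y, j). E x y \<and> i \<le> s \<and> j \<le> s)"

end

theory Submission
  imports Defs "HOL-Library.FuncSet"
begin

text \<open>A point of the edge variety \<open>X = V(I(G))\<close> is a point whose support is an independent set.
  Tangent spaces are read off from the edge monomials, and local dimensions are bounded above by
  Hilbert-function growth (an irreducible subset of \<open>X\<close> lies in the coordinate subspace of a
  vertex cover) and below by a chain of coordinate subspaces. Hence a point whose support is a
  maximal independent set is smooth, and at a smooth point every edge meets the neighbourhood of
  the support. If \<open>a(x,0) \<noteq> 0\<close>, the jet equations force all jet coordinates of the neighbours
  of \<open>x\<close> to vanish; so every edge \<open>{(x, i), (y, j)}\<close> of \<open>PC\<^sub>s(G)\<close> vanishes on the arcs over
  smooth points, hence on the principal component. Conversely, for a maximal independent set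
  \<open>S\<close> every point of the torus of \<open>S \<times> {0..s}\<close> is such an arc, and a polynomial vanishing
  on that torus has no monomial in these variables; so each monomial of a polynomial in the
  vanishing ideal is divisible by an edge of \<open>PC\<^sub>s(G)\<close>.\<close>

section \<open>Evaluation of polynomials\<close>

definition mon_eval :: "('x \<Rightarrow>\<^sub>0 nat) \<Rightarrow> ('x \<Rightarrow> 'k::comm_ring_1) \<Rightarrow> 'k" where
  "mon_eval m a = (\<Prod>x\<in>Poly_Mapping.keys m. a x ^ Poly_Mapping.lookup m x)"

lemma mon_eval_superset:
  assumes "finite K" "Poly_Mapping.keys m \<subseteq> K"
  shows "mon_eval m a = (\<Prod>x\<in>K. a x ^ Poly_Mapping.lookup m x)"
  unfolding mon_eval_def
  by (rule prod.mono_neutral_left[OF assms]) (auto simp: in_keys_iff)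

lemma mon_eval_zero [simp]: "mon_eval 0 a = 1"
  by (simp add: mon_eval_def)

lemma mon_eval_add: "mon_eval (m1 + m2) a = mon_eval m1 a * mon_eval m2 a"
proof -
  let ?K = "Poly_Mapping.keys m1 \<union> Poly_Mapping.keys m2"
  have "mon_eval (m1 + m2) a = (\<Prod>x\<in>?K. a x ^ Poly_Mapping.lookup (m1 + m2) x)"
    by (rule mon_eval_superset) (use keys_add[of m1 m2] in auto)
  also have "\<dots> = (\<Prod>x\<in>?K. a x ^ Poly_Mapping.lookup m1 x) * (\<Prod>x\<in>?K. a x ^ Poly_Mapping.lookup m2 x)"
    by (simp add: lookup_add power_add prod.distrib)
  also have "\<dots> = mon_eval m1 a * mon_eval m2 a"
    by (simp add: mon_eval_superset[symmetric])
  finally show ?thesis .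
qed

lemma mon_eval_eq_0:
  assumes "x \<in> Poly_Mapping.keys m" "a x = 0"
  shows "mon_eval m a = (0::'k::comm_ring_1)"
proof -
  have "a x ^ Poly_Mapping.lookup m x = 0"
    using assms by (simp add: in_keys_iff power_0_left)
  then show ?thesis
    unfolding mon_eval_def using assms(1) by (intro prod_zero) auto
qed

lemma mp_eval_eq_sum_mon_eval:
  "mp_eval f a = (\<Sum>m\<in>Poly_Mapping.keys f. Poly_Mapping.lookup f m * mon_eval m a)"
  by (simp add: mp_eval_def mp_eval_with_def mon_eval_def)

lemma mp_eval_superset:
  assumes "finite M" "Poly_Mapping.keys f \<subseteq> M"
  shows "mp_eval f a = (\<Sum>m\<in>M. Poly_Mapping.lookup f m * mon_eval m a)"
  unfolding mp_eval_eq_sum_mon_eval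
  by (rule sum.mono_neutral_left[OF assms]) (auto simp: in_keys_iff)

lemma mp_eval_add: "mp_eval (f + g) a = mp_eval f a + mp_eval g a"
proof -
  let ?M = "Poly_Mapping.keys f \<union> Poly_Mapping.keys g"
  have "mp_eval (f + g) a = (\<Sum>m\<in>?M. Poly_Mapping.lookup (f + g) m * mon_eval m a)"
    by (rule mp_eval_superset) (use keys_add[of f g] in auto)
  also have "\<dots> = (\<Sum>m\<in>?M. Poly_Mapping.lookup f m * mon_eval m a)
                 + (\<Sum>m\<in>?M. Poly_Mapping.lookup g m * mon_eval m a)"
    by (simp add: lookup_add distrib_right sum.distrib)
  also have "\<dots> = mp_eval f a + mp_eval g a"
    by (simp add: mp_eval_superset[symmetric])
  finally show ?thesis .
qed

lemma mp_eval_zero [simp]: "mp_eval 0 a = 0"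
  by (simp add: mp_eval_eq_sum_mon_eval)

lemma mp_eval_sum: "mp_eval (\<Sum>i\<in>I. f i) a = (\<Sum>i\<in>I. mp_eval (f i) a)"
  by (induction I rule: infinite_finite_induct) (auto simp: mp_eval_add)

lemma mp_eval_single: "mp_eval (Poly_Mapping.single m c) a = c * mon_eval m a"
  by (simp add: mp_eval_eq_sum_mon_eval)

lemma poly_mapping_sum_single:
  "f = (\<Sum>m\<in>Poly_Mapping.keys f. Poly_Mapping.single m (Poly_Mapping.lookup f m))"
  by (rule poly_mapping_eqI) (simp add: lookup_sum lookup_single when_def in_keys_iff)

lemma mp_eval_mult: "mp_eval (f * g) a = mp_eval f a * (mp_eval g a :: 'k::comm_ring_1)"
proof -
  let ?F = "Poly_Mapping.keys f" and ?G = "Poly_Mapping.keys g"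
  have "f * g = (\<Sum>m\<in>?F. Poly_Mapping.single m (Poly_Mapping.lookup f m))
              * (\<Sum>m\<in>?G. Poly_Mapping.single m (Poly_Mapping.lookup g m))"
    by (subst poly_mapping_sum_single[of f], subst poly_mapping_sum_single[of g]) (rule refl)
  also have "\<dots> = (\<Sum>m\<in>?F. \<Sum>m'\<in>?G.
      Poly_Mapping.single (m + m') (Poly_Mapping.lookup f m * Poly_Mapping.lookup g m'))"
    by (simp add: sum_distrib_left sum_distrib_right mult_single) (rule sum.swap)
  finally have "mp_eval (f * g) a = (\<Sum>m\<in>?F. \<Sum>m'\<in>?G.
      Poly_Mapping.lookup f m * Poly_Mapping.lookup g m' * mon_eval (m + m') a)"
    by (simp add: mp_eval_sum mp_eval_single)
  also have "\<dots> = (\<Sum>m\<in>?F. Poly_Mapping.lookup f m * mon_eval m a)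
                 * (\<Sum>m'\<in>?G. Poly_Mapping.lookup g m' * mon_eval m' a)"
    by (simp add: sum_distrib_left sum_distrib_right mon_eval_add mult_ac)
       (subst sum.swap, simp add: mult_ac)
  finally show ?thesis by (simp add: mp_eval_eq_sum_mon_eval)
qed

lemma poly_mp_eval_with_line:
  "poly (mp_eval_with (\<lambda>c. [:c:]) f (\<lambda>x. [:p x, w x:])) t = mp_eval f (\<lambda>x. p x + t * w x)"
  by (simp add: mp_eval_def mp_eval_with_def poly_sum poly_prod poly_power algebra_simps)

definition var :: "'x \<Rightarrow> ('x, 'k::comm_ring_1) mpoly" where
  "var x = Poly_Mapping.single (Poly_Mapping.single x (1::nat)) 1"

lemma mp_eval_var [simp]: "mp_eval (var x :: ('x, 'k::comm_ring_1) mpoly) a = a x"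
  by (simp add: var_def mp_eval_single mon_eval_def)

lemma keys_mp_xy_exponent:
  assumes "x \<noteq> y"
  shows "Poly_Mapping.keys (Poly_Mapping.single x (1::nat) + Poly_Mapping.single y 1) = {x, y}"
    and "Poly_Mapping.lookup (Poly_Mapping.single x (1::nat) + Poly_Mapping.single y 1) x = 1"
    and "Poly_Mapping.lookup (Poly_Mapping.single x (1::nat) + Poly_Mapping.single y 1) y = 1"
  using assms by (auto simp: in_keys_iff lookup_add lookup_single when_def split: if_splits)

lemma mp_eval_with_mp_xy:
  assumes "x \<noteq> y"
  shows "mp_eval_with phi (mp_xy x y :: ('x, 'k::comm_ring_1) mpoly) a = phi 1 * (a x * a y)"
  using assms keys_mp_xy_exponent[OF assms] by (simp add: mp_eval_with_def mp_xy_def)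

lemma mp_eval_mp_xy:
  assumes "x \<noteq> y"
  shows "mp_eval (mp_xy x y :: ('x, 'k::comm_ring_1) mpoly) a = a x * a y"
  using mp_eval_with_mp_xy[OF assms, of "\<lambda>c. c"] by (simp add: mp_eval_def)

lemma mp_differential_mp_xy:
  assumes "x \<noteq> y"
  shows "mp_differential (mp_xy x y :: ('x, 'k::comm_ring_1) mpoly) p w = p x * w y + w x * p y"
  by (simp add: mp_differential_def mp_eval_with_mp_xy[OF assms] algebra_simps)

lemma mp_vars_mp_xy:
  assumes "x \<noteq> y"
  shows "mp_vars (mp_xy x y :: ('x, 'k::comm_ring_1) mpoly) = {x, y}"
  using keys_mp_xy_exponent[OF assms] by (simp add: mp_vars_def mp_xy_def)

lemma mp_vars_add: "mp_vars (f + g) \<subseteq> mp_vars f \<union> mp_vars g"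
  unfolding mp_vars_def using keys_add[of f g] by auto

lemma mp_vars_mult: "mp_vars (f * g) \<subseteq> mp_vars f \<union> mp_vars (g :: ('x, 'k::comm_ring_1) mpoly)"
proof
  fix x assume "x \<in> mp_vars (f * g)"
  then obtain m where m: "m \<in> Poly_Mapping.keys (f * g)" "x \<in> Poly_Mapping.keys m"
    by (auto simp: mp_vars_def)
  then obtain m1 m2 where "m = m1 + m2" "m1 \<in> Poly_Mapping.keys f" "m2 \<in> Poly_Mapping.keys g"
    using keys_mult[of f g] by blast
  with m show "x \<in> mp_vars f \<union> mp_vars g"
    using keys_add[of m1 m2] by (auto simp: mp_vars_def)
qed

lemma mp_vars_sum: "mp_vars (\<Sum>i\<in>I. f i) \<subseteq> (\<Union>i\<in>I. mp_vars (f i))"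
proof (induction I rule: infinite_finite_induct)
  case (insert x F)
  then show ?case using mp_vars_add[of "f x" "sum f F"] by auto
qed (auto simp: mp_vars_def)

lemma polys_add: "f \<in> polys V \<Longrightarrow> g \<in> polys V \<Longrightarrow> f + g \<in> polys V"
  using mp_vars_add[of f g] by (auto simp: polys_def)

lemma polys_mult:
  "f \<in> polys V \<Longrightarrow> g \<in> polys V \<Longrightarrow> (f * g :: ('x, 'k::comm_ring_1) mpoly) \<in> polys V"
  using mp_vars_mult by (fastforce simp: polys_def)

lemma polys_sum: "(\<And>i. i \<in> I \<Longrightarrow> f i \<in> polys V) \<Longrightarrow> (\<Sum>i\<in>I. f i) \<in> polys V"
  using mp_vars_sum[of f I] by (fastforce simp: polys_def)

lemma polys_UNIV [simp]: "polys UNIV = UNIV"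
  by (simp add: polys_def)

lemma aff_space_UNIV [simp]: "aff_space UNIV = UNIV"
  by (simp add: aff_space_def)

section \<open>Zariski-closed and irreducible sets\<close>

lemma infinite_UNIV_alg_closed_field: "infinite (UNIV :: 'k::alg_closed_field set)"
proof
  assume fin: "finite (UNIV :: 'k set)"
  define p :: "'k poly" where "p = (\<Prod>a\<in>UNIV. [:- a, 1:]) + 1"
  have "degree (\<Prod>a\<in>(UNIV::'k set). [:- a, 1:]) = card (UNIV :: 'k set)"
    by (subst degree_prod_eq_sum_degree) auto
  moreover have "card (UNIV :: 'k set) > 0"
    using fin by (simp add: finite_UNIV_card_ge_0)
  ultimately have "degree p > 0"
    unfolding p_def by (simp add: degree_add_eq_left)
  then obtain x where "poly p x = 0"
    using alg_closed_imp_poly_has_root by blast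
  moreover have "poly (\<Prod>a\<in>(UNIV::'k set). [:- a, 1:]) x = 0"
    by (simp add: poly_prod fin)
  ultimately show False by (simp add: p_def)
qed

lemma poly_eq_0_if_vanishes_everywhere:
  assumes "infinite (UNIV :: 'k::idom set)" "\<And>t. poly P t = (0::'k)"
  shows "P = 0"
  using poly_roots_finite[of P] assms by auto

lemma zero_set_antimono: "F \<subseteq> G \<Longrightarrow> zero_set V G \<subseteq> zero_set V F"
  by (auto simp: zero_set_def)

lemma subset_zariski_closure: "S \<subseteq> aff_space V \<Longrightarrow> S \<subseteq> zariski_closure V S"
  by (auto simp: zariski_closure_def zero_set_def vanishing_ideal_def)

lemma zariski_closed_zero_set:
  assumes "F \<subseteq> polys V"
  shows "zariski_closed V (zero_set V F)"
proof -
  have "F \<subseteq> vanishing_ideal V (zero_set V F)"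
    using assms by (auto simp: vanishing_ideal_def zero_set_def)
  then have "zariski_closure V (zero_set V F) \<subseteq> zero_set V F"
    unfolding zariski_closure_def by (rule zero_set_antimono)
  moreover have "zero_set V F \<subseteq> aff_space V"
    by (auto simp: zero_set_def)
  ultimately show ?thesis
    unfolding zariski_closed_def using subset_zariski_closure by blast
qed

lemma zero_set_vanishing_ideal_closed:
  "zariski_closed V Z \<Longrightarrow> zero_set V (vanishing_ideal V Z) = Z"
  by (simp add: zariski_closed_def zariski_closure_def)

lemma zariski_closed_separating_poly:
  assumes "zariski_closed V Z" "b \<in> aff_space V" "b \<notin> Z"
  obtains f where "f \<in> vanishing_ideal V Z" "mp_eval f b \<noteq> 0"
  using assms zero_set_vanishing_ideal_closed[OF assms(1)] by (auto simp: zero_set_def)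

lemma zariski_closed_Int_hypersurface:
  assumes "zariski_closed V Z" "f \<in> polys V"
  shows "zariski_closed V {a \<in> Z. mp_eval f a = 0}"
proof -
  have "{a \<in> Z. mp_eval f a = 0} = zero_set V (insert f (vanishing_ideal V Z))"
    using zero_set_vanishing_ideal_closed[OF assms(1)] by (auto simp: zero_set_def)
  then show ?thesis
    using assms by (auto simp: vanishing_ideal_def intro: zariski_closed_zero_set)
qed

lemma zariski_irreducible_product_vanishes:
  fixes Z :: "('x \<Rightarrow> 'k::idom) set"
  assumes irr: "zariski_irreducible V Z" and "f \<in> polys V" "q \<in> polys V"
    and prod0: "\<And>a. a \<in> Z \<Longrightarrow> mp_eval f a * mp_eval q a = 0"
  shows "(\<forall>a\<in>Z. mp_eval f a = 0) \<or> (\<forall>a\<in>Z. mp_eval q a = 0)"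
proof -
  let ?Z1 = "{a \<in> Z. mp_eval f a = 0}" and ?Z2 = "{a \<in> Z. mp_eval q a = 0}"
  have "Z = ?Z1 \<union> ?Z2"
    using prod0 by auto
  moreover have "zariski_closed V ?Z1" "zariski_closed V ?Z2"
    using irr assms(2,3) by (auto simp: zariski_irreducible_def intro: zariski_closed_Int_hypersurface)
  ultimately have "?Z1 = Z \<or> ?Z2 = Z"
    using irr unfolding zariski_irreducible_def by blast
  then show ?thesis by blast
qed

text \<open>A closed set containing, with any two of its points, the whole line through them is
  irreducible: two polynomials separating the points from the pieces of a decomposition
  restrict to nonzero univariate polynomials on that line, and their product has a non-root
  because the field is infinite.\<close>

lemma zariski_irreducible_if_line_closed:
  fixes Z :: "('x \<Rightarrow> 'k::idom) set"
  assumes inf: "infinite (UNIV :: 'k set)"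
    and cl: "zariski_closed V Z" and ne: "Z \<noteq> {}"
    and line: "\<And>a b t. a \<in> Z \<Longrightarrow> b \<in> Z \<Longrightarrow> (\<lambda>x. a x + t * (b x - a x)) \<in> Z"
  shows "zariski_irreducible V Z"
  unfolding zariski_irreducible_def
proof (intro conjI cl ne allI impI)
  fix Z1 Z2 assume H: "zariski_closed V Z1 \<and> zariski_closed V Z2 \<and> Z = Z1 \<union> Z2"
  show "Z1 = Z \<or> Z2 = Z"
  proof (rule ccontr)
    assume "\<not> (Z1 = Z \<or> Z2 = Z)"
    then obtain b1 b2 where b1: "b1 \<in> Z" "b1 \<notin> Z1" and b2: "b2 \<in> Z" "b2 \<notin> Z2"
      using H by blast
    have aff: "Z \<subseteq> aff_space V"
      using cl by (simp add: zariski_closed_def)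
    obtain f1 where f1: "f1 \<in> vanishing_ideal V Z1" "mp_eval f1 b1 \<noteq> 0"
      using zariski_closed_separating_poly[of V Z1 b1] H b1 aff by blast
    obtain f2 where f2: "f2 \<in> vanishing_ideal V Z2" "mp_eval f2 b2 \<noteq> 0"
      using zariski_closed_separating_poly[of V Z2 b2] H b2 aff by blast
    define P where "P f = mp_eval_with (\<lambda>c. [:c:]) f (\<lambda>x. [:b1 x, b2 x - b1 x:])" for f
    have P: "poly (P f) t = mp_eval f (\<lambda>x. b1 x + t * (b2 x - b1 x))" for f t
      unfolding P_def by (rule poly_mp_eval_with_line)
    have "poly (P f1) 0 \<noteq> 0" "poly (P f2) 1 \<noteq> 0"
      using f1 f2 by (simp_all add: P)
    then have "P f1 * P f2 \<noteq> 0"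
      by auto
    then obtain t where t: "poly (P f1 * P f2) t \<noteq> 0"
      using poly_eq_0_if_vanishes_everywhere[OF inf] by blast
    have "(\<lambda>x. b1 x + t * (b2 x - b1 x)) \<in> Z1 \<union> Z2"
      using line b1 b2 H by blast
    then have "poly (P f1) t = 0 \<or> poly (P f2) t = 0"
      using f1 f2 by (auto simp: P vanishing_ideal_def)
    with t show False by simp
  qed
qed

section \<open>Dimensions of spaces of functions\<close>

interpretation fspace: vector_space "\<lambda>(c::'k::field) (w::'a \<Rightarrow> 'k) x. c * w x"
  by unfold_locales (auto simp: fun_eq_iff algebra_simps)

interpretation fspace_pair: vector_space_pair "\<lambda>(c::'k::field) (w::'a \<Rightarrow> 'k) x. c * w x"
   "\<lambda>(c::'k::field) (w::'a \<Rightarrow> 'k) x. c * w x"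
  by unfold_locales

lemma sum_fun_apply: "(\<Sum>i\<in>I. F i) a = (\<Sum>i\<in>I. F i a)"
  by (induction I rule: infinite_finite_induct) auto

lemma linear_mult_fun:
  "Vector_Spaces.linear (\<lambda>(c::'k::field) (w::'a \<Rightarrow> 'k) x. c * w x)
     (\<lambda>(c::'k::field) (w::'a \<Rightarrow> 'k) x. c * w x) (\<lambda>g a. h a * g a)"
  unfolding Vector_Spaces.linear_iff
  by (auto simp: fspace.vector_space_axioms fun_eq_iff algebra_simps)

lemma fspace_card_le_dim:
  fixes S :: "('a \<Rightarrow> 'k::field) set"
  assumes "finite T" "S \<subseteq> fspace.span T" "B \<subseteq> S" "fspace.independent B"
  shows "card B \<le> fspace.dim S"
proof -
  obtain A where A: "A \<subseteq> S" "fspace.independent A" "S \<subseteq> fspace.span A" "card A = fspace.dim S"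
    by (rule fspace.basis_exists)
  have "finite A"
    using fspace.independent_span_bound[OF assms(1) A(2)] A(1) assms(2) by auto
  then show ?thesis
    using fspace.independent_span_bound[OF _ assms(4)] A assms(3) by fastforce
qed

lemma fspace_dim_mono:
  fixes S :: "('a \<Rightarrow> 'k::field) set"
  assumes "finite T" "S \<subseteq> T"
  shows "fspace.dim S \<le> fspace.dim T"
proof -
  obtain B where B: "B \<subseteq> T" "fspace.independent B" "T \<subseteq> fspace.span B" "card B = fspace.dim T"
    by (rule fspace.basis_exists)
  then have "finite B"
    using assms(1) finite_subset by blast
  moreover have "S \<subseteq> fspace.span B"
    using B(3) assms(2) by blast
  ultimately show ?thesis
    using fspace.dim_le_card B(4) by metis
qed

text \<open>If \<open>M\<close> embeds the span of \<open>W\<close> into the span of \<open>T\<close> and \<open>R\<close> kills that image, then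
  \<open>dim W + dim (R ` T) \<le> dim T\<close>: extend the image of a basis of \<open>W\<close> to a basis of \<open>span T\<close>;
  \<open>R\<close> maps the new vectors onto a spanning set of \<open>R ` T\<close>.\<close>

lemma fspace_dim_add_dim_image_le:
  fixes M R :: "('a \<Rightarrow> 'k::field) \<Rightarrow> ('a \<Rightarrow> 'k)"
  assumes fW: "finite W" and fT: "finite T"
    and linM: "Vector_Spaces.linear (\<lambda>(c::'k) (w::'a \<Rightarrow> 'k) x. c * w x) (\<lambda>(c::'k) (w::'a \<Rightarrow> 'k) x. c * w x) M"
    and linR: "Vector_Spaces.linear (\<lambda>(c::'k) (w::'a \<Rightarrow> 'k) x. c * w x) (\<lambda>(c::'k) (w::'a \<Rightarrow> 'k) x. c * w x) R"
    and injM: "inj_on M (fspace.span W)"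
    and MW: "M ` W \<subseteq> fspace.span T"
    and RM: "\<And>w. w \<in> fspace.span W \<Longrightarrow> R (M w) = 0"
  shows "fspace.dim W + fspace.dim (R ` T) \<le> fspace.dim T"
proof -
  obtain B where B: "B \<subseteq> W" "fspace.independent B" "W \<subseteq> fspace.span B" "card B = fspace.dim W"
    by (rule fspace.basis_exists)
  have injB: "inj_on M (fspace.span B)"
    using injM fspace.span_mono[OF B(1)] inj_on_subset by blast
  have iB': "fspace.independent (M ` B)"
    using fspace_pair.linear_independent_injective_image[OF linM B(2) injB] .
  have cB': "card (M ` B) = card B"
    using card_image[OF inj_on_subset[OF injM]] B(1) fspace.span_base by blast
  have B'T: "M ` B \<subseteq> fspace.span T"
    using MW B(1) by blast
  obtain C where C: "M ` B \<subseteq> C" "C \<subseteq> fspace.span T" "fspace.independent C"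
      "fspace.span T \<subseteq> fspace.span C"
    using fspace.maximal_independent_subset_extend[OF B'T iB'] by blast
  have fC: "finite C"
    using fspace.independent_span_bound[OF fT C(3) C(2)] by blast
  have cC: "card C = fspace.dim T"
    using fspace.basis_card_eq_dim[OF C(2) C(4) C(3)] by simp
  have "R ` C \<subseteq> insert 0 (R ` (C - M ` B))"
    using RM B(1) fspace.span_base by blast
  then have "fspace.span (R ` C) \<subseteq> fspace.span (R ` (C - M ` B))"
    by (metis fspace.span_insert_0 fspace.span_mono)
  moreover have "R ` T \<subseteq> fspace.span (R ` C)"
  proof -
    have "R ` T \<subseteq> R ` fspace.span C"
      using C(4) fspace.span_base by blast
    also have "\<dots> = fspace.span (R ` C)"
      using fspace_pair.linear_span_image[OF linR] by simp
    finally show ?thesis .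
  qed
  ultimately have "R ` T \<subseteq> fspace.span (R ` (C - M ` B))"
    by blast
  then have "fspace.dim (R ` T) \<le> card (R ` (C - M ` B))"
    using fspace.dim_le_card fC by blast
  also have "\<dots> \<le> card (C - M ` B)"
    using fC by (simp add: card_image_le)
  also have "\<dots> = card C - card (M ` B)"
    using C(1) fC by (simp add: card_Diff_subset finite_subset)
  finally have "fspace.dim (R ` T) \<le> card C - card (M ` B)" .
  moreover have "card (M ` B) \<le> card C"
    using C(1) fC card_mono by blast
  ultimately show ?thesis
    using B(4) cB' cC by linarith
qed

definition unit_vec :: "'v \<Rightarrow> 'v \<Rightarrow> 'k::{zero,one}" where
  "unit_vec x = (\<lambda>z. if z = x then 1 else 0)"

lemma inj_unit_vec: "inj (unit_vec :: 'v \<Rightarrow> 'v \<Rightarrow> 'k::zero_neq_one)"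
  by (rule injI) (metis unit_vec_def zero_neq_one)

lemma sum_unit_vec_apply:
  "(\<Sum>x\<in>A. (\<lambda>z. c x * unit_vec x z)) y = (if y \<in> A then c y else (0::'k::field))"
  if "finite A"
  using that by (simp add: sum_fun_apply unit_vec_def if_distrib[where f = "\<lambda>u. _ * u"] cong: if_cong)

lemma fspace_independent_unit_vec:
  "fspace.independent (unit_vec ` A :: ('v::finite \<Rightarrow> 'k::field) set)"
proof (rule fspace.independent_if_scalars_zero)
  show "finite (unit_vec ` A :: ('v \<Rightarrow> 'k) set)"
    by simp
  fix f :: "('v \<Rightarrow> 'k) \<Rightarrow> 'k" and v :: "'v \<Rightarrow> 'k"
  assume s0: "(\<Sum>x\<in>unit_vec ` A. (\<lambda>z. f x * x z)) = 0" and v: "v \<in> unit_vec ` A"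
  then obtain y where y: "v = unit_vec y" "y \<in> A"
    by blast
  have "0 = (\<Sum>x\<in>unit_vec ` A. (\<lambda>z. f x * x z)) y"
    using s0 by simp
  also have "\<dots> = (\<Sum>x\<in>A. (\<lambda>z. f (unit_vec x) * unit_vec x z)) y"
    by (subst sum.reindex[OF inj_on_subset[OF inj_unit_vec]]) auto
  also have "\<dots> = f v"
    using y by (simp add: sum_unit_vec_apply)
  finally show "f v = 0" by simp
qed

lemma vanishing_on_subset_span_unit_vec:
  "{w :: 'v::finite \<Rightarrow> 'k::field. \<forall>y\<in>C. w y = 0} \<subseteq> fspace.span (unit_vec ` (UNIV - C))"
proof
  fix w :: "'v \<Rightarrow> 'k" assume w: "w \<in> {w. \<forall>y\<in>C. w y = 0}"
  have "w = (\<Sum>x\<in>UNIV - C. (\<lambda>z. w x * unit_vec x z))"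
    using w by (auto simp: fun_eq_iff sum_unit_vec_apply)
  also have "\<dots> \<in> fspace.span (unit_vec ` (UNIV - C))"
    by (intro fspace.span_sum fspace.span_scale fspace.span_base) auto
  finally show "w \<in> fspace.span (unit_vec ` (UNIV - C))" .
qed

lemma card_le_fspace_dim_if_unit_vecs:
  fixes T :: "('v::finite \<Rightarrow> 'k::field) set"
  assumes "unit_vec ` A \<subseteq> T"
  shows "card A \<le> fspace.dim T"
proof -
  have "card (unit_vec ` A :: ('v \<Rightarrow> 'k) set) \<le> fspace.dim T"
    by (rule fspace_card_le_dim[of "unit_vec ` UNIV"])
       (use assms vanishing_on_subset_span_unit_vec[of "{}"] fspace_independent_unit_vec in auto)
  moreover have "card (unit_vec ` A :: ('v \<Rightarrow> 'k) set) = card A"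
    by (rule card_image) (rule inj_on_subset[OF inj_unit_vec], simp)
  ultimately show ?thesis by simp
qed

lemma fspace_dim_le_card_if_vanishing_on:
  fixes T :: "('v::finite \<Rightarrow> 'k::field) set"
  assumes "T \<subseteq> {w. \<forall>y\<in>C. w y = 0}"
  shows "fspace.dim T \<le> card (UNIV - C)"
proof -
  have "fspace.dim T \<le> card (unit_vec ` (UNIV - C) :: ('v \<Rightarrow> 'k) set)"
    by (rule fspace.dim_le_card) (use assms vanishing_on_subset_span_unit_vec[of C] in auto)
  also have "\<dots> \<le> card (UNIV - C)"
    by (rule card_image_le) simp
  finally show ?thesis .
qed

section \<open>Chains of irreducible sets and Hilbert functions\<close>

lemma Suc_add_one_power_le: "(K + 1 :: nat) ^ Suc n \<le> K ^ Suc n + Suc n * (K + 1) ^ n"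
proof (induction n)
  case (Suc n)
  have "(K + 1 :: nat) ^ Suc (Suc n) = (K + 1) * (K + 1) ^ Suc n"
    by simp
  also have "\<dots> \<le> (K + 1) * (K ^ Suc n + Suc n * (K + 1) ^ n)"
    using Suc.IH by (rule mult_left_mono) simp
  also have "\<dots> = K ^ Suc (Suc n) + K ^ Suc n + Suc n * (K + 1) ^ Suc n"
    by (simp add: algebra_simps)
  also have "\<dots> \<le> K ^ Suc (Suc n) + (K + 1) ^ Suc n + Suc n * (K + 1) ^ Suc n"
    using power_mono[of K "K + 1" "Suc n"] by simp
  finally show ?case by (simp add: algebra_simps)
qed simp

lemma power_Suc_le_sum_powers: "(K :: nat) ^ Suc n \<le> Suc n * (\<Sum>k\<in>{1..K}. k ^ n)"
proof (induction K)
  case (Suc K)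
  have "Suc K ^ Suc n \<le> K ^ Suc n + Suc n * (K + 1) ^ n"
    using Suc_add_one_power_le[of K n] by simp
  also have "\<dots> \<le> Suc n * (\<Sum>k\<in>{1..K}. k ^ n) + Suc n * Suc K ^ n"
    using Suc.IH by simp
  also have "\<dots> = Suc n * (\<Sum>k\<in>{1..Suc K}. k ^ n)"
    by (simp add: algebra_simps)
  finally show ?case .
qed simp

text \<open>If each \<open>h (Suc i)\<close> outgrows \<open>h i\<close> in the
  sense of the step hypothesis, then by induction \<open>h i\<close> grows at least like \<open>N ^ i / i!\<close>
  along multiples of a common shift; a polynomial bound of degree \<open>u\<close> on \<open>h r\<close> forces \<open>r \<le> u\<close>.\<close>

lemma chain_length_le_growth_degree:
  fixes h :: "nat \<Rightarrow> nat \<Rightarrow> nat"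
  assumes upper: "\<And>N. h r N \<le> (N + 1) ^ u"
    and base: "\<And>N. 1 \<le> h 0 N"
    and mono: "\<And>i N N'. i \<le> r \<Longrightarrow> N \<le> N' \<Longrightarrow> h i N \<le> h i N'"
    and step: "\<And>i. i < r \<Longrightarrow> \<exists>e. \<forall>N. h i (N + e) + h (Suc i) N \<le> h (Suc i) (N + e)"
  shows "r \<le> u"
proof (rule ccontr)
  assume ru: "\<not> r \<le> u"
  obtain es where es: "\<And>i N. i < r \<Longrightarrow> h i (N + es i) + h (Suc i) N \<le> h (Suc i) (N + es i)"
    using step by metis
  define E where "E = 1 + (\<Sum>i<r. es i)"
  have esE: "es i \<le> E" if "i < r" for i
    unfolding E_def using that by (simp add: member_le_sum le_SucI trans_le_add2)
  have stepE: "h i (N + E) + h (Suc i) N \<le> h (Suc i) (N + E)" if "i < r" for i N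
  proof -
    define N' where "N' = N + E - es i"
    have "N' + es i = N + E"
      using esE[OF that] by (simp add: N'_def)
    moreover have "h (Suc i) N \<le> h (Suc i) N'"
      using mono[of "Suc i" N N'] that esE[OF that] by (simp add: N'_def)
    ultimately show ?thesis
      using es[OF that, of N'] by simp
  qed
  define g where "g i K = h i (K * E)" for i K
  have sum_g: "(\<Sum>k\<in>{1..K}. g i k) \<le> g (Suc i) K" if "i < r" for i K
  proof (induction K)
    case (Suc K)
    then show ?case
      using stepE[OF that, of "K * E"] by (simp add: g_def add.commute)
  qed simp
  have lower: "K ^ i \<le> fact i * g i K" if "i \<le> r" for i K
    using that
  proof (induction i arbitrary: K)
    case 0
    then show ?case using base by (simp add: g_def)
  next
    case (Suc i)
    then have ir: "i < r" by simp
    have "K ^ Suc i \<le> Suc i * (\<Sum>k\<in>{1..K}. k ^ i)"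
      by (rule power_Suc_le_sum_powers)
    also have "\<dots> \<le> Suc i * (\<Sum>k\<in>{1..K}. fact i * g i k)"
      using Suc.IH ir by (intro mult_left_mono sum_mono) auto
    also have "\<dots> = fact (Suc i) * (\<Sum>k\<in>{1..K}. g i k)"
      by (simp add: sum_distrib_left algebra_simps)
    also have "\<dots> \<le> fact (Suc i) * g (Suc i) K"
      using sum_g[OF ir] by simp
    finally show ?case .
  qed
  define K where "K = fact r * (E + 1) ^ u + 1"
  have K1: "K \<ge> 1"
    by (simp add: K_def)
  have "K ^ r \<le> fact r * g r K"
    using lower by simp
  also have "\<dots> \<le> fact r * (K * E + 1) ^ u"
    using upper[of "K * E"] by (simp add: g_def)
  also have "\<dots> \<le> fact r * (K * (E + 1)) ^ u"
    using K1 by (intro mult_left_mono power_mono) (auto simp: algebra_simps)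
  also have "\<dots> = (fact r * (E + 1) ^ u) * K ^ u"
    by (simp only: power_mult_distrib mult_ac)
  also have "\<dots> = (K - 1) * K ^ u"
    by (simp add: K_def)
  also have "\<dots> < K ^ Suc u"
    using K1 by simp
  also have "\<dots> \<le> K ^ r"
    using ru K1 by (intro power_increasing) auto
  finally show False by simp
qed

text \<open>Regular functions on \<open>Z\<close> are encoded as functions on the whole space that vanish off \<open>Z\<close>.
  \<open>hilbert_fn Z U N\<close> is the dimension of the span of the monomials in the variables \<open>U\<close> of
  degree at most \<open>N\<close> in each variable, viewed as functions on \<open>Z\<close>.\<close>

definition zero_outside :: "'a set \<Rightarrow> ('a \<Rightarrow> 'k::zero) \<Rightarrow> ('a \<Rightarrow> 'k)" where
  "zero_outside Z g = (\<lambda>a. if a \<in> Z then g a else 0)"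

definition box_monomials :: "'v set \<Rightarrow> nat \<Rightarrow> ('v \<Rightarrow>\<^sub>0 nat) set" where
  "box_monomials U N = {m. Poly_Mapping.keys m \<subseteq> U \<and> (\<forall>x. Poly_Mapping.lookup m x \<le> N)}"

definition monomial_functions :: "('v \<Rightarrow> 'k::comm_ring_1) set \<Rightarrow> 'v set \<Rightarrow> nat \<Rightarrow> (('v \<Rightarrow> 'k) \<Rightarrow> 'k) set" where
  "monomial_functions Z U N = (\<lambda>m. zero_outside Z (mon_eval m)) ` box_monomials U N"

definition hilbert_fn :: "('v \<Rightarrow> 'k::field) set \<Rightarrow> 'v set \<Rightarrow> nat \<Rightarrow> nat" where
  "hilbert_fn Z U N = fspace.dim (monomial_functions Z U N)"

lemma finite_box_monomials_card:
  assumes "finite U"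
  shows "finite (box_monomials U N) \<and> card (box_monomials U N) \<le> (N + 1) ^ card U"
proof -
  let ?f = "\<lambda>m. restrict (Poly_Mapping.lookup m) U"
  have inj: "inj_on ?f (box_monomials U N)"
  proof (rule inj_onI)
    fix m1 m2 assume m: "m1 \<in> box_monomials U N" "m2 \<in> box_monomials U N" "?f m1 = ?f m2"
    show "m1 = m2"
    proof (rule poly_mapping_eqI)
      fix x
      show "Poly_Mapping.lookup m1 x = Poly_Mapping.lookup m2 x"
      proof (cases "x \<in> U")
        case True
        then show ?thesis using m(3) by (metis restrict_apply')
      next
        case False
        then show ?thesis using m(1,2)
          by (auto simp: box_monomials_def in_keys_iff) (metis in_mono in_keys_iff)+
      qed
    qed
  qed
  have sub: "?f ` box_monomials U N \<subseteq> PiE U (\<lambda>_. {..N})"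
    by (auto simp: box_monomials_def)
  have fin: "finite (PiE U (\<lambda>_. {..N}))"
    using assms by (simp add: finite_PiE)
  have "card (PiE U (\<lambda>_. {..N})) = (N + 1) ^ card U"
    using assms by (simp add: card_PiE)
  then show ?thesis
    using inj_on_finite[OF inj sub fin] card_inj_on_le[OF inj sub fin] by simp
qed

lemma finite_monomial_functions: "finite U \<Longrightarrow> finite (monomial_functions Z U N)"
  using finite_box_monomials_card[of U N] by (simp add: monomial_functions_def)

lemma hilbert_fn_le:
  assumes "finite U"
  shows "hilbert_fn (Z :: ('v \<Rightarrow> 'k::field) set) U N \<le> (N + 1) ^ card U"
proof -
  have "hilbert_fn Z U N \<le> card (monomial_functions Z U N)"
    unfolding hilbert_fn_def using finite_monomial_functions[OF assms] by (rule fspace.dim_le_card')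
  also have "\<dots> \<le> card (box_monomials U N)"
    unfolding monomial_functions_def using finite_box_monomials_card[OF assms] by (simp add: card_image_le)
  finally show ?thesis
    using finite_box_monomials_card[OF assms, of N] by simp
qed

lemma hilbert_fn_mono:
  assumes "finite U" "N \<le> N'"
  shows "hilbert_fn (Z :: ('v \<Rightarrow> 'k::field) set) U N \<le> hilbert_fn Z U N'"
  unfolding hilbert_fn_def
  by (rule fspace_dim_mono[OF finite_monomial_functions[OF assms(1)]])
     (use assms(2) in \<open>auto simp: monomial_functions_def box_monomials_def intro: order_trans\<close>)

lemma hilbert_fn_ge_1:
  assumes "finite U" "Z \<noteq> {}"
  shows "1 \<le> hilbert_fn (Z :: ('v \<Rightarrow> 'k::field) set) U N"
proof -
  have "zero_outside Z (mon_eval 0) \<in> monomial_functions Z U N"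
    by (auto simp: monomial_functions_def box_monomials_def)
  moreover have "zero_outside Z (mon_eval 0) \<noteq> (0 :: ('v \<Rightarrow> 'k) \<Rightarrow> 'k)"
    using assms(2) by (auto simp: zero_outside_def fun_eq_iff)
  ultimately have "card {zero_outside Z (mon_eval 0)} \<le> hilbert_fn Z U N"
    unfolding hilbert_fn_def
    by (intro fspace_card_le_dim[OF finite_monomial_functions[OF assms(1)], of _ Z N])
       (auto simp: fspace.span_base)
  then show ?thesis by simp
qed

lemma span_monomial_functions_obtain_poly:
  fixes Z :: "('v \<Rightarrow> 'k::field) set"
  assumes "g \<in> fspace.span (monomial_functions Z U N)"
  obtains q where "g = zero_outside Z (mp_eval q)"
proof -
  from assms have "\<exists>q. g = zero_outside Z (mp_eval q)"
  proof (induction rule: fspace.span_induct_alt)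
    case base
    show ?case by (rule exI[of _ 0]) (simp add: zero_outside_def fun_eq_iff)
  next
    case (step c x y)
    from step(1) obtain m where x: "x = zero_outside Z (mon_eval m)"
      by (auto simp: monomial_functions_def)
    from step(2) obtain q where y: "y = zero_outside Z (mp_eval q)"
      by blast
    show ?case
      by (rule exI[of _ "Poly_Mapping.single m c + q"])
         (simp add: x y zero_outside_def fun_eq_iff mp_eval_add mp_eval_single)
  qed
  then show ?thesis using that by blast
qed

definition max_exponent :: "('x, 'k::zero) mpoly \<Rightarrow> nat" where
  "max_exponent f = (\<Sum>m\<in>Poly_Mapping.keys f. \<Sum>x\<in>Poly_Mapping.keys m. Poly_Mapping.lookup m x)"

lemma lookup_le_max_exponent:
  assumes "m \<in> Poly_Mapping.keys f"
  shows "Poly_Mapping.lookup m x \<le> max_exponent f"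
proof (cases "x \<in> Poly_Mapping.keys m")
  case True
  have "Poly_Mapping.lookup m x \<le> (\<Sum>x\<in>Poly_Mapping.keys m. Poly_Mapping.lookup m x)"
    using True by (intro member_le_sum) auto
  also have "\<dots> \<le> max_exponent f"
    unfolding max_exponent_def using assms
    by (intro member_le_sum[of m _ "\<lambda>m. \<Sum>x\<in>Poly_Mapping.keys m. Poly_Mapping.lookup m x"]) auto
  finally show ?thesis .
qed (simp add: in_keys_iff)

lemma mult_monomial_function_in_span:
  fixes Z :: "('v \<Rightarrow> 'k::field) set"
  assumes m: "m \<in> box_monomials U N"
    and outside: "\<And>a x. a \<in> Z \<Longrightarrow> x \<notin> U \<Longrightarrow> a x = 0"
  shows "(\<lambda>a. mp_eval f a * zero_outside Z (mon_eval m) a)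
           \<in> fspace.span (monomial_functions Z U (N + max_exponent f))"
proof -
  have in_span: "zero_outside Z (mon_eval (m' + m)) \<in> fspace.span (monomial_functions Z U (N + max_exponent f))"
    if m': "m' \<in> Poly_Mapping.keys f" for m'
  proof (cases "Poly_Mapping.keys m' \<subseteq> U")
    case True
    have "m' + m \<in> box_monomials U (N + max_exponent f)"
      using True m lookup_le_max_exponent[OF m'] keys_add[of m' m]
      by (auto simp: box_monomials_def lookup_add) (metis add_le_mono add.commute)
    then show ?thesis
      by (intro fspace.span_base) (auto simp: monomial_functions_def)
  next
    case False
    then obtain x where x: "x \<in> Poly_Mapping.keys m'" "x \<notin> U"
      by blast
    then have "x \<in> Poly_Mapping.keys (m' + m)"
      by (simp add: in_keys_iff lookup_add)
    then have "zero_outside Z (mon_eval (m' + m)) = 0"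
      using outside x(2) mon_eval_eq_0 by (fastforce simp: zero_outside_def fun_eq_iff)
    then show ?thesis
      by (simp add: fspace.span_zero)
  qed
  have "(\<lambda>a. mp_eval f a * zero_outside Z (mon_eval m) a) =
      (\<Sum>m'\<in>Poly_Mapping.keys f. (\<lambda>a. Poly_Mapping.lookup f m' * zero_outside Z (mon_eval (m' + m)) a))"
    by (auto simp: zero_outside_def fun_eq_iff sum_fun_apply mp_eval_eq_sum_mon_eval
        sum_distrib_left mon_eval_add mult_ac)
  also have "\<dots> \<in> fspace.span (monomial_functions Z U (N + max_exponent f))"
    using in_span by (intro fspace.span_sum fspace.span_scale)
  finally show ?thesis .
qed

lemma inj_on_mult_span_monomial_functions:
  fixes Z :: "('v \<Rightarrow> 'k::field) set"
  assumes irr: "zariski_irreducible UNIV Z" and a0: "a0 \<in> Z" "mp_eval f a0 \<noteq> 0"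
  shows "inj_on (\<lambda>g a. mp_eval f a * g a) (fspace.span (monomial_functions Z U N))"
proof -
  have "w = 0" if w: "w \<in> fspace.span (monomial_functions Z U N)" "(\<lambda>a. mp_eval f a * w a) = 0" for w
  proof -
    obtain q where q: "w = zero_outside Z (mp_eval q)"
      using span_monomial_functions_obtain_poly[OF w(1)] by blast
    have "mp_eval f a * mp_eval q a = 0" if "a \<in> Z" for a
      using fun_cong[OF w(2), of a] that by (simp add: q zero_outside_def)
    then have "(\<forall>a\<in>Z. mp_eval f a = 0) \<or> (\<forall>a\<in>Z. mp_eval q a = 0)"
      by (intro zariski_irreducible_product_vanishes[OF irr]) auto
    then show "w = 0"
      using a0 by (auto simp: q zero_outside_def fun_eq_iff)
  qed
  then show ?thesis
    using fspace_pair.linear_inj_on_iff_eq_0[OF linear_mult_fun fspace.subspace_span] by blast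
qed

text \<open>For a strict inclusion \<open>Z \<subset> Z'\<close> of a closed set in an irreducible one, pick \<open>f\<close> vanishing on
  \<open>Z\<close> but not on \<open>Z'\<close>. Multiplication by \<open>f\<close> embeds the degree-\<open>N\<close> part of \<open>Z'\<close> into its
  degree-\<open>N + e\<close> part, with image killed by restriction to \<open>Z\<close>.\<close>

lemma hilbert_fn_step:
  fixes Z Z' :: "('v::finite \<Rightarrow> 'k::field) set"
  assumes irr': "zariski_irreducible UNIV Z'" and cl: "zariski_closed UNIV Z" and sub: "Z \<subset> Z'"
    and outside: "\<And>a x. a \<in> Z' \<Longrightarrow> x \<notin> U \<Longrightarrow> a x = 0"
  shows "\<exists>e. \<forall>N. hilbert_fn Z U (N + e) + hilbert_fn Z' U N \<le> hilbert_fn Z' U (N + e)"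
proof -
  obtain a0 where a0: "a0 \<in> Z'" "a0 \<notin> Z"
    using sub by blast
  obtain f where f: "f \<in> vanishing_ideal UNIV Z" "mp_eval f a0 \<noteq> 0"
    using zariski_closed_separating_poly[OF cl, of a0] a0 by auto
  let ?e = "max_exponent f"
  let ?M = "\<lambda>(g :: ('v \<Rightarrow> 'k) \<Rightarrow> 'k) a. mp_eval f a * g a"
    and ?R = "\<lambda>(g :: ('v \<Rightarrow> 'k) \<Rightarrow> 'k) a. (if a \<in> Z then 1 else 0) * g a"
  have restrict_image: "?R ` monomial_functions Z' U n = monomial_functions Z U n" for n
  proof -
    have "?R (zero_outside Z' g) = zero_outside Z g" for g
      using sub by (auto simp: zero_outside_def fun_eq_iff)
    then show ?thesis
      by (simp add: monomial_functions_def image_image)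
  qed
  have "hilbert_fn Z' U N + hilbert_fn Z U (N + ?e) \<le> hilbert_fn Z' U (N + ?e)" for N
    unfolding hilbert_fn_def restrict_image[symmetric]
  proof (rule fspace_dim_add_dim_image_le[OF finite_monomial_functions finite_monomial_functions
        linear_mult_fun linear_mult_fun])
    show "inj_on ?M (fspace.span (monomial_functions Z' U N))"
      using inj_on_mult_span_monomial_functions[OF irr' a0(1) f(2)] .
    show "?M ` monomial_functions Z' U N \<subseteq> fspace.span (monomial_functions Z' U (N + ?e))"
      using mult_monomial_function_in_span[of _ U N Z' f] outside by (auto simp: monomial_functions_def)
    show "?R (?M w) = 0" for w
      using f(1) by (auto simp: vanishing_ideal_def fun_eq_iff)
  qed simp_all
  then show ?thesis
    by (intro exI[of _ ?e]) (simp add: add.commute)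
qed

lemma chain_subset_last:
  assumes "\<And>i. i < r \<Longrightarrow> Z i \<subset> Z (Suc i)" "i \<le> r"
  shows "Z i \<subseteq> Z r"
  using assms(2)
proof (induction "r - i" arbitrary: i)
  case (Suc d)
  then have "Z (Suc i) \<subseteq> Z r" by simp
  moreover have "i < r"
    using Suc.hyps(2) by simp
  then have "Z i \<subseteq> Z (Suc i)"
    using assms(1)[of i] by auto
  ultimately show ?case by blast
qed simp

lemma irreducible_chain_length_le_card:
  fixes Z :: "nat \<Rightarrow> ('v::finite \<Rightarrow> 'k::field) set"
  assumes irr: "\<And>i. i \<le> r \<Longrightarrow> zariski_irreducible UNIV (Z i)"
    and chain: "\<And>i. i < r \<Longrightarrow> Z i \<subset> Z (Suc i)"
    and outside: "\<And>a x. a \<in> Z r \<Longrightarrow> x \<notin> U \<Longrightarrow> a x = 0"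
  shows "r \<le> card U"
proof (rule chain_length_le_growth_degree[where h = "\<lambda>i N. hilbert_fn (Z i) U N"])
  show "hilbert_fn (Z r) U N \<le> (N + 1) ^ card U" for N
    by (rule hilbert_fn_le) simp
  show "1 \<le> hilbert_fn (Z 0) U N" for N
    using irr[of 0] by (intro hilbert_fn_ge_1) (auto simp: zariski_irreducible_def)
  show "hilbert_fn (Z i) U N \<le> hilbert_fn (Z i) U N'" if "N \<le> N'" for i N N'
    by (rule hilbert_fn_mono) (simp_all add: that)
  show "\<exists>e. \<forall>N. hilbert_fn (Z i) U (N + e) + hilbert_fn (Z (Suc i)) U N \<le> hilbert_fn (Z (Suc i)) U (N + e)"
    if "i < r" for i
  proof (rule hilbert_fn_step)
    show "zariski_irreducible UNIV (Z (Suc i))" "zariski_closed UNIV (Z i)" "Z i \<subset> Z (Suc i)"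
      using irr[of i] irr[of "Suc i"] chain that by (auto simp: zariski_irreducible_def)
    show "a x = 0" if "a \<in> Z (Suc i)" "x \<notin> U" for a x
      using outside chain_subset_last[of r Z "Suc i"] chain \<open>i < r\<close> that by auto
  qed
qed

section \<open>Polynomials vanishing on a coordinate torus\<close>

lemma base_digits_sum_less:
  assumes "\<And>k. k < n \<Longrightarrow> d k < (B::nat)"
  shows "(\<Sum>k<n. B ^ k * d k) < B ^ n"
  using assms
proof (induction n)
  case (Suc n)
  have IH: "(\<Sum>k<n. B ^ k * d k) < B ^ n"
    using Suc by simp
  have "d n < B"
    using Suc.prems by simp
  then have "B ^ n * d n \<le> B ^ n * (B - 1)"
    by (intro mult_left_mono) auto
  moreover have "(\<Sum>k<Suc n. B ^ k * d k) = (\<Sum>k<n. B ^ k * d k) + B ^ n * d n"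
    by simp
  ultimately have "(\<Sum>k<Suc n. B ^ k * d k) < B ^ n + B ^ n * (B - 1)"
    using IH by linarith
  also have "\<dots> = B ^ Suc n"
    using \<open>d n < B\<close> by (cases B) (auto simp: algebra_simps)
  finally show ?case .
qed simp

lemma base_digits_unique:
  assumes "\<And>k. k < n \<Longrightarrow> d k < (B::nat)" "\<And>k. k < n \<Longrightarrow> d' k < B"
    and "(\<Sum>k<n. B ^ k * d k) = (\<Sum>k<n. B ^ k * d' k)"
  shows "\<forall>k<n. d k = d' k"
  using assms
proof (induction n)
  case (Suc n)
  have b1: "(\<Sum>k<n. B ^ k * d k) < B ^ n" and b2: "(\<Sum>k<n. B ^ k * d' k) < B ^ n"
    using Suc.prems by (auto intro: base_digits_sum_less)
  have eq: "(\<Sum>k<n. B ^ k * d k) + B ^ n * d n = (\<Sum>k<n. B ^ k * d' k) + B ^ n * d' n"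
    using Suc.prems(3) by simp
  have Bn: "B ^ n > 0"
    using Suc.prems(1)[of n] by simp
  have "((\<Sum>k<n. B ^ k * d k) + B ^ n * d n) div B ^ n = d n"
    using b1 Bn by (simp add: div_add1_eq[symmetric] add.commute)
  moreover have "((\<Sum>k<n. B ^ k * d' k) + B ^ n * d' n) div B ^ n = d' n"
    using b2 Bn by (simp add: add.commute)
  ultimately have dn: "d n = d' n"
    using eq by simp
  have "\<forall>k<n. d k = d' k"
    using Suc.prems eq dn by (intro Suc.IH) auto
  with dn show ?case
    by (auto simp: less_Suc_eq)
qed simp

text \<open>Kronecker substitution: numbering the variables of \<open>U\<close> by \<open>idx\<close> and substituting
  \<open>t ^ B ^ idx x\<close> for \<open>x\<close> turns the monomial \<open>m\<close> into \<open>t ^ kronecker_exp B idx U m\<close>; for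
  exponents below \<open>B\<close> these are base-\<open>B\<close> expansions, hence distinct.\<close>

definition kronecker_exp :: "nat \<Rightarrow> ('x \<Rightarrow> nat) \<Rightarrow> 'x set \<Rightarrow> ('x \<Rightarrow>\<^sub>0 nat) \<Rightarrow> nat" where
  "kronecker_exp B idx U m = (\<Sum>x\<in>U. B ^ idx x * Poly_Mapping.lookup m x)"

lemma mon_eval_kronecker_point:
  assumes "finite U" "Poly_Mapping.keys m \<subseteq> U"
  shows "mon_eval m (\<lambda>z. if z \<in> U then t ^ (B ^ idx z) else 0) = t ^ kronecker_exp B idx U m"
proof -
  have "mon_eval m (\<lambda>z. if z \<in> U then t ^ (B ^ idx z) else 0)
      = (\<Prod>x\<in>U. t ^ (B ^ idx x * Poly_Mapping.lookup m x))"
    using assms by (subst mon_eval_superset) (auto simp: power_mult intro: prod.cong)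
  then show ?thesis
    by (simp add: kronecker_exp_def power_sum)
qed

lemma kronecker_exp_inj:
  assumes idx: "bij_betw idx U {0..<card U}"
    and keys: "Poly_Mapping.keys m1 \<subseteq> U" "Poly_Mapping.keys m2 \<subseteq> U"
    and less: "\<And>x. Poly_Mapping.lookup m1 x < B" "\<And>x. Poly_Mapping.lookup m2 x < B"
    and eq: "kronecker_exp B idx U m1 = kronecker_exp B idx U m2"
  shows "m1 = m2"
proof -
  let ?iv = "the_inv_into U idx"
  have inj: "inj_on idx U"
    using idx by (rule bij_betw_imp_inj_on)
  have digits: "kronecker_exp B idx U m = (\<Sum>k<card U. B ^ k * Poly_Mapping.lookup m (?iv k))" for m
    using sum.reindex_bij_betw[OF idx, of "\<lambda>k. B ^ k * Poly_Mapping.lookup m (?iv k)"]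
    by (simp add: kronecker_exp_def atLeast0LessThan the_inv_into_f_f[OF inj])
  have "\<forall>k<card U. Poly_Mapping.lookup m1 (?iv k) = Poly_Mapping.lookup m2 (?iv k)"
    using eq less by (intro base_digits_unique[of "card U" _ B]) (auto simp: digits)
  then have "Poly_Mapping.lookup m1 x = Poly_Mapping.lookup m2 x" if "x \<in> U" for x
    using that idx the_inv_into_f_f[OF inj] by (metis atLeastLessThan_iff bij_betwE)
  moreover have "Poly_Mapping.lookup m1 x = Poly_Mapping.lookup m2 x" if "x \<notin> U" for x
    using that keys by (metis in_keys_iff subsetD)
  ultimately show ?thesis
    by (metis poly_mapping_eqI)
qed

text \<open>Along the curve \<open>t \<mapsto> (t ^ B ^ idx x)\<^sub>x\<^sub>\<in>\<^sub>U\<close> inside the torus, \<open>f\<close> becomes a univariate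
  polynomial whose coefficients are those of the monomials of \<open>f\<close> in the variables \<open>U\<close>.\<close>

lemma monomial_not_within_if_vanishes_on_torus:
  fixes f :: "('x, 'k::idom) mpoly"
  assumes inf: "infinite (UNIV::'k set)" and fU: "finite U"
    and vanish: "\<And>a. (\<And>z. z \<notin> U \<Longrightarrow> a z = 0) \<Longrightarrow> (\<And>u. u \<in> U \<Longrightarrow> a u \<noteq> 0) \<Longrightarrow> mp_eval f a = 0"
    and m0: "m0 \<in> Poly_Mapping.keys f"
  shows "\<not> Poly_Mapping.keys m0 \<subseteq> U"
proof
  assume m0U: "Poly_Mapping.keys m0 \<subseteq> U"
  define B where "B = Suc (max_exponent f)"
  obtain idx where idx: "bij_betw idx U {0..<card U}"
    using ex_bij_betw_finite_nat[OF fU] by blast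
  define K where "K = {m \<in> Poly_Mapping.keys f. Poly_Mapping.keys m \<subseteq> U}"
  let ?psi = "kronecker_exp B idx U"
  define G where "G = (\<Sum>m\<in>K. monom (Poly_Mapping.lookup f m) (?psi m))"
  have "poly G t = 0" if "t \<noteq> 0" for t
  proof -
    define a where "a = (\<lambda>z. if z \<in> U then t ^ (B ^ idx z) else 0)"
    have "mp_eval f a = (\<Sum>m\<in>K. Poly_Mapping.lookup f m * mon_eval m a)"
      unfolding mp_eval_eq_sum_mon_eval
    proof (rule sum.mono_neutral_right)
      show "\<forall>m\<in>Poly_Mapping.keys f - K. Poly_Mapping.lookup f m * mon_eval m a = 0"
        using mon_eval_eq_0[of _ _ a] by (fastforce simp: K_def a_def)
    qed (auto simp: K_def)
    also have "\<dots> = poly G t"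
      unfolding G_def poly_sum poly_monom a_def
      using fU by (intro sum.cong refl) (simp add: K_def mon_eval_kronecker_point)
    finally show ?thesis
      using vanish[of a] that by (simp add: a_def)
  qed
  then have "G = 0"
    using poly_roots_finite[of G] inf finite_subset[of "UNIV - {0}" "{t. poly G t = 0}"] by auto
  moreover have "coeff G (?psi m0) = Poly_Mapping.lookup f m0"
  proof -
    have m0K: "m0 \<in> K"
      using m0 m0U by (simp add: K_def)
    have "m = m0" if "m \<in> K" "?psi m = ?psi m0" for m
      using that m0K lookup_le_max_exponent
      by (intro kronecker_exp_inj[OF idx]) (auto simp: K_def B_def less_Suc_eq_le)
    then have "coeff G (?psi m0) = (\<Sum>m\<in>K. if m = m0 then Poly_Mapping.lookup f m else 0)"
      unfolding G_def coeff_sum coeff_monom by (intro sum.cong) auto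
    then show ?thesis
      using m0K by (simp add: K_def)
  qed
  ultimately show False
    using m0 by (simp add: in_keys_iff)
qed

section \<open>The smooth locus of the edge variety\<close>

definition edge_variety :: "('v \<Rightarrow> 'v \<Rightarrow> bool) \<Rightarrow> ('v \<Rightarrow> 'k::comm_ring_1) set" where
  "edge_variety E = zero_set UNIV (edge_gens E :: ('v, 'k) mpoly set)"

definition supp :: "('v \<Rightarrow> 'k::zero) \<Rightarrow> 'v set" where
  "supp p = {x. p x \<noteq> 0}"

definition nbhd :: "('v \<Rightarrow> 'v \<Rightarrow> bool) \<Rightarrow> 'v set \<Rightarrow> 'v set" where
  "nbhd E S = {y. \<exists>x\<in>S. E x y}"

lemma mem_edge_variety_iff:
  fixes E :: "'v \<Rightarrow> 'v \<Rightarrow> bool" and a :: "'v \<Rightarrow> 'k::comm_ring_1"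
  assumes irrefl: "\<And>x. \<not> E x x"
  shows "a \<in> edge_variety E \<longleftrightarrow> (\<forall>x y. E x y \<longrightarrow> a x * a y = 0)"
proof -
  have ne: "E x y \<Longrightarrow> x \<noteq> y" for x y
    using irrefl by blast
  have "a \<in> edge_variety E \<longleftrightarrow> (\<forall>x y. E x y \<longrightarrow> mp_eval (mp_xy x y :: ('v, 'k) mpoly) a = 0)"
    by (auto simp: edge_variety_def zero_set_def edge_gens_def)
  also have "\<dots> \<longleftrightarrow> (\<forall>x y. E x y \<longrightarrow> a x * a y = 0)"
    using ne by (auto simp: mp_eval_mp_xy)
  finally show ?thesis .
qed

lemma mp_xy_in_vanishing_ideal_edge_variety:
  assumes irrefl: "\<And>x. \<not> E x x" and "E x y"
  shows "(mp_xy x y :: ('v, 'k::comm_ring_1) mpoly) \<in> vanishing_ideal UNIV (edge_variety E)"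
proof -
  have "x \<noteq> y"
    using assms by blast
  then show ?thesis
    using assms(2) by (auto simp: vanishing_ideal_def mem_edge_variety_iff[OF irrefl] mp_eval_mp_xy)
qed

lemma tangent_space_edge_variety_vanishes_at_nbhd:
  fixes p :: "'v \<Rightarrow> 'k::field"
  assumes irrefl: "\<And>x. \<not> E x x" and p: "p \<in> edge_variety E" and y: "y \<in> nbhd E (supp p)"
    and w: "w \<in> tangent_space UNIV (edge_variety E) p"
  shows "w y = 0"
proof -
  obtain x where x: "E x y" "p x \<noteq> 0"
    using y by (auto simp: nbhd_def supp_def)
  have xy: "x \<noteq> y"
    using irrefl x(1) by blast
  have "p x * p y = 0"
    using p x(1) by (simp add: mem_edge_variety_iff[OF irrefl])
  then have py: "p y = 0"
    using x(2) by simp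
  have "mp_differential (mp_xy x y :: ('v, 'k) mpoly) p w = 0"
    using w mp_xy_in_vanishing_ideal_edge_variety[of E, OF irrefl x(1)] by (auto simp: tangent_space_def)
  then show ?thesis
    using mp_differential_mp_xy[OF xy, of p w] py x(2) by simp
qed

text \<open>Away from the neighbourhood of \<open>supp p\<close> the coordinate can be moved freely inside the
  edge variety; so every polynomial vanishing on the variety vanishes on the whole line
  \<open>p + t e\<^sub>x\<close>, and its differential at \<open>p\<close> in direction \<open>e\<^sub>x\<close> is \<open>0\<close>.\<close>

lemma unit_vec_in_tangent_space_edge_variety:
  fixes p :: "'v \<Rightarrow> 'k::field"
  assumes inf: "infinite (UNIV :: 'k set)"
    and sym: "\<And>x y. E x y \<Longrightarrow> E y x" and irrefl: "\<And>x. \<not> E x x"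
    and p: "p \<in> edge_variety E" and x: "x \<notin> nbhd E (supp p)"
  shows "unit_vec x \<in> tangent_space UNIV (edge_variety E) p"
proof -
  have line: "(\<lambda>z. p z + t * unit_vec x z) \<in> edge_variety E" for t
  proof -
    have "(p u + t * unit_vec x u) * (p v + t * unit_vec x v) = 0" if "E u v" for u v
    proof -
      have "p u * p v = 0"
        using p that by (simp add: mem_edge_variety_iff[OF irrefl])
      moreover have "p v = 0" if "u = x"
        using x \<open>E u v\<close> that sym by (auto simp: nbhd_def supp_def)
      moreover have "p u = 0" if "v = x"
        using x \<open>E u v\<close> that by (auto simp: nbhd_def supp_def)
      moreover have "u \<noteq> v"
        using irrefl that by blast
      ultimately show ?thesis
        by (auto simp: unit_vec_def)
    qed
    then show ?thesis
      by (simp add: mem_edge_variety_iff[OF irrefl])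
  qed
  show ?thesis
    unfolding tangent_space_def
  proof (intro CollectI conjI ballI)
    fix f :: "('v, 'k) mpoly"
    assume f: "f \<in> vanishing_ideal UNIV (edge_variety E)"
    define P where "P = mp_eval_with (\<lambda>c. [:c:]) f (\<lambda>z. [:p z, unit_vec x z:])"
    have "poly P t = 0" for t
      unfolding P_def poly_mp_eval_with_line using f line[of t] by (auto simp: vanishing_ideal_def)
    then have "P = 0"
      by (rule poly_eq_0_if_vanishes_everywhere[OF inf])
    then show "mp_differential f p (unit_vec x) = 0"
      by (simp add: mp_differential_def P_def)
  qed simp
qed

definition chain_lengths :: "('v \<Rightarrow> 'k::comm_ring_1) set \<Rightarrow> ('v \<Rightarrow> 'k) \<Rightarrow> nat set" where
  "chain_lengths X p = {r. \<exists>Z :: nat \<Rightarrow> ('v \<Rightarrow> 'k) set.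
      p \<in> Z 0 \<and> (\<forall>i\<le>r. zariski_irreducible UNIV (Z i) \<and> Z i \<subseteq> X) \<and>
      (\<forall>i<r. Z i \<subset> Z (Suc i))}"

lemma local_dim_eq_Sup_chain_lengths: "local_dim UNIV X p = Sup (chain_lengths X p)"
  by (simp add: local_dim_def chain_lengths_def)

text \<open>An irreducible subset of the edge variety lies in the coordinate subspace of some vertex
  cover \<open>C\<close> (for each edge, one of the two coordinates vanishes on all of it), and the bound on
  chains in coordinate subspaces applies.\<close>

lemma chain_length_le_card_cover_complement:
  fixes p :: "'v::finite \<Rightarrow> 'k::field" and E :: "'v \<Rightarrow> 'v \<Rightarrow> bool"
  assumes irrefl: "\<And>x. \<not> E x x" and r: "r \<in> chain_lengths (edge_variety E) p"
  obtains C where "\<And>x y. E x y \<Longrightarrow> x \<in> C \<or> y \<in> C" "\<And>x. x \<in> C \<Longrightarrow> p x = 0"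
    "r \<le> card (UNIV - C)"
proof -
  obtain Z :: "nat \<Rightarrow> ('v \<Rightarrow> 'k) set" where Z: "p \<in> Z 0"
    "\<And>i. i \<le> r \<Longrightarrow> zariski_irreducible UNIV (Z i)" "\<And>i. i \<le> r \<Longrightarrow> Z i \<subseteq> edge_variety E"
    "\<And>i. i < r \<Longrightarrow> Z i \<subset> Z (Suc i)"
    using r by (auto simp: chain_lengths_def)
  define C where "C = {x. \<forall>a\<in>Z r. a x = 0}"
  have "x \<in> C \<or> y \<in> C" if "E x y" for x y
  proof -
    have "mp_eval (var x :: ('v, 'k) mpoly) a * mp_eval (var y :: ('v, 'k) mpoly) a = 0"
      if "a \<in> Z r" for a
    proof -
      have "a \<in> edge_variety E"
        using Z(3)[of r] that by blast
      then show ?thesis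
        using \<open>E x y\<close> by (simp add: mem_edge_variety_iff[OF irrefl])
    qed
    then have "(\<forall>a\<in>Z r. mp_eval (var x :: ('v, 'k) mpoly) a = 0) \<or>
          (\<forall>a\<in>Z r. mp_eval (var y :: ('v, 'k) mpoly) a = 0)"
      by (intro zariski_irreducible_product_vanishes[OF Z(2)[of r]]) auto
    then show ?thesis
      by (simp add: C_def)
  qed
  moreover have "p \<in> Z r"
    using chain_subset_last[of r Z 0] Z(1,4) by auto
  then have "p x = 0" if "x \<in> C" for x
    using that by (auto simp: C_def)
  moreover have "r \<le> card (UNIV - C)"
    by (rule irreducible_chain_length_le_card[of r Z]) (use Z in \<open>auto simp: C_def\<close>)
  ultimately show ?thesis
    using that by blast
qed

lemma chain_length_le_card_UNIV:
  fixes p :: "'v::finite \<Rightarrow> 'k::field"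
  assumes irrefl: "\<And>x. \<not> E x x" and "r \<in> chain_lengths (edge_variety E) p"
  shows "r \<le> card (UNIV :: 'v set)"
proof -
  obtain C where "r \<le> card (UNIV - C :: 'v set)"
    by (rule chain_length_le_card_cover_complement[OF assms])
  moreover have "card (UNIV - C) \<le> card (UNIV :: 'v set)"
    by (rule card_mono) auto
  ultimately show ?thesis
    by linarith
qed

lemma local_dim_edge_variety_le:
  fixes p :: "'v::finite \<Rightarrow> 'k::field" and E :: "'v \<Rightarrow> 'v \<Rightarrow> bool"
  assumes irrefl: "\<And>x. \<not> E x x"
    and bound: "\<And>C. (\<And>x y. E x y \<Longrightarrow> x \<in> C \<or> y \<in> C) \<Longrightarrow> nbhd E (supp p) \<subseteq> C \<Longrightarrow>
        card (UNIV - C) \<le> b"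
  shows "local_dim UNIV (edge_variety E) p \<le> b"
proof -
  have "r \<le> b" if r: "r \<in> chain_lengths (edge_variety E) p" for r
  proof -
    obtain C where C: "\<And>x y. E x y \<Longrightarrow> x \<in> C \<or> y \<in> C" "\<And>x. x \<in> C \<Longrightarrow> p x = 0"
        "r \<le> card (UNIV - C)"
      using chain_length_le_card_cover_complement[OF irrefl r] by metis
    have "nbhd E (supp p) \<subseteq> C"
      using C(1,2) by (fastforce simp: nbhd_def supp_def)
    then show ?thesis
      using bound[OF C(1)] C(3) by fastforce
  qed
  then show ?thesis
    unfolding local_dim_eq_Sup_chain_lengths
    by (cases "chain_lengths (edge_variety E) p = {}") (auto intro: cSup_least)
qed

text \<open>The chain of affine subspaces obtained by freeing the coordinates of \<open>supp p\<close> one at a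
  time stays inside the edge variety.\<close>

lemma card_supp_in_chain_lengths:
  fixes p :: "'v::finite \<Rightarrow> 'k::field" and E :: "'v \<Rightarrow> 'v \<Rightarrow> bool"
  assumes inf: "infinite (UNIV :: 'k set)" and irrefl: "\<And>x. \<not> E x x"
    and p: "p \<in> edge_variety E"
  shows "card (supp p) \<in> chain_lengths (edge_variety E) p"
proof -
  obtain xs where xs: "distinct xs" "set xs = supp p"
    using finite_distinct_list[of "supp p"] by auto
  define Z where "Z i = {a :: 'v \<Rightarrow> 'k. \<forall>x. x \<notin> set (take i xs) \<longrightarrow> a x = p x}" for i
  have p0: "p \<in> Z 0"
    by (simp add: Z_def)
  have "Z i \<subseteq> edge_variety E" for i
  proof
    fix a assume a: "a \<in> Z i"
    have "p x \<noteq> 0" if "a x \<noteq> 0" for x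
      using a that xs(2) set_take_subset[of i xs] by (cases "x \<in> set (take i xs)") (auto simp: Z_def supp_def)
    then show "a \<in> edge_variety E"
      using p by (auto simp: mem_edge_variety_iff[OF irrefl])
  qed
  moreover have "zariski_irreducible UNIV (Z i)" for i
  proof (rule zariski_irreducible_if_line_closed[OF inf])
    define F where "F = {(var x :: ('v, 'k) mpoly) + Poly_Mapping.single 0 (- p x) | x. x \<notin> set (take i xs)}"
    have "Z i = zero_set UNIV F"
      by (auto simp: Z_def F_def zero_set_def mp_eval_add mp_eval_single)
    then show "zariski_closed UNIV (Z i)"
      by (simp add: zariski_closed_zero_set)
  qed (use p0 in \<open>auto simp: Z_def\<close>)
  moreover have "Z i \<subset> Z (Suc i)" if "i < length xs" for i
  proof
    have tk: "set (take (Suc i) xs) = insert (xs ! i) (set (take i xs))"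
      using that by (simp add: take_Suc_conv_app_nth)
    then show "Z i \<subseteq> Z (Suc i)"
      by (auto simp: Z_def)
    have "xs ! i \<notin> set (take i xs)"
      using that xs(1) distinct_take[of xs "Suc i"] by (simp add: take_Suc_conv_app_nth)
    then have "p(xs ! i := p (xs ! i) + 1) \<in> Z (Suc i) - Z i"
      using tk by (auto simp: Z_def)
    then show "Z i \<noteq> Z (Suc i)"
      by blast
  qed
  moreover have "length xs = card (supp p)"
    using xs distinct_card by fastforce
  ultimately show ?thesis
    unfolding chain_lengths_def using p0 by (intro CollectI exI[of _ Z]) auto
qed

text \<open>The tangent space is spanned by the unit vectors of \<open>S\<close>, and the local dimension is
  \<open>card S\<close>.\<close>

lemma smooth_if_supp_maximal_independent:
  fixes p :: "'v::finite \<Rightarrow> 'k::field" and E :: "'v \<Rightarrow> 'v \<Rightarrow> bool"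
  assumes inf: "infinite (UNIV :: 'k set)"
    and sym: "\<And>x y. E x y \<Longrightarrow> E y x" and irrefl: "\<And>x. \<not> E x x"
    and S: "supp p = S"
    and indep: "\<And>x y. x \<in> S \<Longrightarrow> y \<in> S \<Longrightarrow> \<not> E x y"
    and maximal: "\<And>x. x \<notin> S \<Longrightarrow> \<exists>y\<in>S. E y x"
  shows "p \<in> smooth_locus UNIV (edge_variety E)"
proof -
  have pX: "p \<in> edge_variety E"
    using indep S by (auto simp: mem_edge_variety_iff[OF irrefl] supp_def)
  have nbhd: "nbhd E S = UNIV - S"
    using indep maximal by (auto simp: nbhd_def)
  have "unit_vec ` S \<subseteq> tangent_space UNIV (edge_variety E) p"
    using unit_vec_in_tangent_space_edge_variety[OF inf sym irrefl pX] nbhd S by auto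
  then have "card S \<le> fspace.dim (tangent_space UNIV (edge_variety E) p)"
    by (rule card_le_fspace_dim_if_unit_vecs)
  moreover have "tangent_space UNIV (edge_variety E) p \<subseteq> {w. \<forall>y\<in>UNIV - S. w y = 0}"
    using tangent_space_edge_variety_vanishes_at_nbhd[OF irrefl pX] S nbhd by blast
  then have "fspace.dim (tangent_space UNIV (edge_variety E) p) \<le> card (UNIV - (UNIV - S))"
    by (rule fspace_dim_le_card_if_vanishing_on)
  moreover have "local_dim UNIV (edge_variety E) p \<le> card S"
  proof (rule local_dim_edge_variety_le[OF irrefl])
    fix C assume "nbhd E (supp p) \<subseteq> C"
    then have "UNIV - C \<subseteq> S"
      using S nbhd by blast
    then show "card (UNIV - C) \<le> card S"
      by (rule card_mono[rotated]) simp
  qed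
  moreover have "card S \<le> local_dim UNIV (edge_variety E) p"
    unfolding local_dim_eq_Sup_chain_lengths
  proof (rule cSup_upper)
    show "card S \<in> chain_lengths (edge_variety E) p"
      using card_supp_in_chain_lengths[OF inf irrefl pX] S by simp
    show "bdd_above (chain_lengths (edge_variety E) p)"
      by (rule bdd_aboveI) (rule chain_length_le_card_UNIV[of E, OF irrefl])
  qed
  ultimately show ?thesis
    using pX by (simp add: smooth_locus_def Diff_Diff_Int)
qed

text \<open>An edge \<open>u v\<close> avoiding the neighbourhood of the support contributes two unit vectors to
  the tangent space but at most one dimension to every chain, because a vertex cover must
  contain \<open>u\<close> or \<open>v\<close>.\<close>

lemma edge_meets_nbhd_supp_if_smooth:
  fixes p :: "'v::finite \<Rightarrow> 'k::field" and E :: "'v \<Rightarrow> 'v \<Rightarrow> bool"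
  assumes inf: "infinite (UNIV :: 'k set)"
    and sym: "\<And>x y. E x y \<Longrightarrow> E y x" and irrefl: "\<And>x. \<not> E x x"
    and smooth: "p \<in> smooth_locus UNIV (edge_variety E)" and uv: "E u v"
  shows "u \<in> nbhd E (supp p) \<or> v \<in> nbhd E (supp p)"
proof (rule ccontr)
  assume nuv: "\<not> (u \<in> nbhd E (supp p) \<or> v \<in> nbhd E (supp p))"
  let ?N = "nbhd E (supp p)"
  have pX: "p \<in> edge_variety E"
    using smooth by (simp add: smooth_locus_def)
  have "unit_vec ` (UNIV - ?N) \<subseteq> tangent_space UNIV (edge_variety E) p"
    using unit_vec_in_tangent_space_edge_variety[OF inf sym irrefl pX] by auto
  then have "card (UNIV - ?N) \<le> fspace.dim (tangent_space UNIV (edge_variety E) p)"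
    by (rule card_le_fspace_dim_if_unit_vecs)
  also have "\<dots> = local_dim UNIV (edge_variety E) p"
    using smooth by (simp add: smooth_locus_def)
  finally have "card (UNIV - ?N) \<le> local_dim UNIV (edge_variety E) p" .
  moreover have "local_dim UNIV (edge_variety E) p \<le> card (UNIV - ?N) - 1"
  proof (rule local_dim_edge_variety_le[OF irrefl])
    fix C assume C: "\<And>x y. E x y \<Longrightarrow> x \<in> C \<or> y \<in> C" "?N \<subseteq> C"
    obtain w where w: "w \<in> C" "w \<notin> ?N"
      using C(1) uv nuv by blast
    then have "UNIV - C \<subseteq> (UNIV - ?N) - {w}"
      using C(2) by blast
    then have "card (UNIV - C) \<le> card ((UNIV - ?N) - {w})"
      by (rule card_mono[rotated]) simp
    then show "card (UNIV - C) \<le> card (UNIV - ?N) - 1"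
      using w by simp
  qed
  moreover have "UNIV - ?N \<noteq> {}"
    using nuv by blast
  then have "card (UNIV - ?N) \<ge> 1"
    by (simp add: Suc_le_eq card_gt_0_iff)
  ultimately show False
    by simp
qed

section \<open>Jets of the edge variety\<close>

lemma coeff_jet_arc: "coeff (jet_arc s a v) l = (if l \<le> s then a (v, l) else 0)"
  by (simp add: jet_arc_def coeff_sum coeff_monom)

lemma coeff_jet_arc_mult_eq_0:
  fixes a :: "'v \<times> nat \<Rightarrow> 'k::comm_ring_1"
  assumes irrefl: "\<And>x. \<not> E x x" and a: "a \<in> jet_scheme s (edge_gens E)"
    and E: "E x y" and l: "l \<le> s"
  shows "coeff (jet_arc s a x * jet_arc s a y) l = 0"
proof -
  have xy: "x \<noteq> y"
    using irrefl E by blast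
  have "(mp_xy x y :: ('v, 'k) mpoly) \<in> edge_gens E"
    using E by (auto simp: edge_gens_def)
  then have "coeff (mp_eval_with (\<lambda>c. [:c:]) (mp_xy x y :: ('v, 'k) mpoly) (jet_arc s a)) l = 0"
    using a l by (auto simp: jet_scheme_def)
  then show ?thesis
    by (simp add: mp_eval_with_mp_xy[OF xy])
qed

text \<open>If the arc of \<open>x\<close> has nonzero constant term, then the product with the arc of a neighbour
  \<open>y\<close> vanishes modulo \<open>t\<^sup>s\<^sup>+\<^sup>1\<close> only if the arc of \<open>y\<close> does; by induction on the degree, all
  jet coordinates of \<open>y\<close> vanish.\<close>

lemma jet_scheme_vanishes_at_neighbour:
  fixes a :: "'v \<times> nat \<Rightarrow> 'k::idom"
  assumes irrefl: "\<And>x. \<not> E x x" and a: "a \<in> jet_scheme s (edge_gens E)" and E: "E x y"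
    and ax: "a (x, 0) \<noteq> 0" and l: "l \<le> s"
  shows "a (y, l) = 0"
  using l
proof (induction l rule: less_induct)
  case (less l)
  have "0 = coeff (jet_arc s a x * jet_arc s a y) l"
    using coeff_jet_arc_mult_eq_0[OF irrefl a E less.prems] by simp
  also have "\<dots> = (\<Sum>i\<le>l. coeff (jet_arc s a x) i * coeff (jet_arc s a y) (l - i))"
    by (rule coeff_mult)
  also have "\<dots> = (\<Sum>i\<le>l. if i = 0 then a (x, 0) * a (y, l) else 0)"
  proof (rule sum.cong[OF refl])
    fix i assume i: "i \<in> {..l}"
    show "coeff (jet_arc s a x) i * coeff (jet_arc s a y) (l - i)
        = (if i = 0 then a (x, 0) * a (y, l) else 0)"
      using less i by (cases "i = 0") (auto simp: coeff_jet_arc)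
  qed
  also have "\<dots> = a (x, 0) * a (y, l)"
    by simp
  finally show ?case
    using ax by simp
qed

lemma zero_mem_ideal_gen: "0 \<in> ideal_gen V F"
  unfolding ideal_gen_def by (rule CollectI, rule exI[of _ "{}"]) auto

lemma ideal_gen_add:
  assumes "f \<in> ideal_gen V F" "g \<in> ideal_gen V F"
  shows "f + g \<in> ideal_gen V F"
proof -
  obtain S1 c1 where 1: "finite S1" "S1 \<subseteq> F" "\<forall>h\<in>S1. c1 h \<in> polys V" "f = (\<Sum>h\<in>S1. c1 h * h)"
    using assms(1) by (auto simp: ideal_gen_def)
  obtain S2 c2 where 2: "finite S2" "S2 \<subseteq> F" "\<forall>h\<in>S2. c2 h \<in> polys V" "g = (\<Sum>h\<in>S2. c2 h * h)"
    using assms(2) by (auto simp: ideal_gen_def)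
  define c where "c h = (if h \<in> S1 then c1 h else 0) + (if h \<in> S2 then c2 h else 0)" for h
  have "0 \<in> polys V"
    by (simp add: polys_def mp_vars_def)
  then have cp: "\<forall>h\<in>S1 \<union> S2. c h \<in> polys V"
    using 1(3) 2(3) by (auto simp: c_def intro!: polys_add)
  have s1: "(\<Sum>h\<in>S1 \<union> S2. (if h \<in> S1 then c1 h else 0) * h) = (\<Sum>h\<in>S1. c1 h * h)"
    by (rule sum.mono_neutral_cong_right) (use 1(1) 2(1) in auto)
  have s2: "(\<Sum>h\<in>S1 \<union> S2. (if h \<in> S2 then c2 h else 0) * h) = (\<Sum>h\<in>S2. c2 h * h)"
    by (rule sum.mono_neutral_cong_right) (use 1(1) 2(1) in auto)
  have "f + g = (\<Sum>h\<in>S1 \<union> S2. c h * h)"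
    unfolding c_def distrib_right sum.distrib s1 s2 1(4) 2(4) ..
  then show ?thesis
    unfolding ideal_gen_def using 1 2 cp by (intro CollectI exI[of _ "S1 \<union> S2"] exI[of _ c]) auto
qed

lemma ideal_gen_sum:
  assumes "\<And>i. i \<in> I \<Longrightarrow> f i \<in> ideal_gen V F"
  shows "(\<Sum>i\<in>I. f i) \<in> ideal_gen V F"
  using assms
proof (induction I rule: infinite_finite_induct)
  case (insert x F)
  then show ?case
    by (simp add: ideal_gen_add)
qed (auto simp: zero_mem_ideal_gen)

lemma mult_mem_ideal_gen:
  assumes "g \<in> F" "c \<in> polys V"
  shows "c * g \<in> ideal_gen V F"
  unfolding ideal_gen_def using assms
  by (intro CollectI exI[of _ "{g}"] exI[of _ "\<lambda>_. c"]) auto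

lemma mem_ideal_gen_if_monomials:
  assumes "\<And>m. m \<in> Poly_Mapping.keys f \<Longrightarrow> Poly_Mapping.single m (Poly_Mapping.lookup f m) \<in> ideal_gen V F"
  shows "f \<in> ideal_gen V F"
proof -
  have "(\<Sum>m\<in>Poly_Mapping.keys f. Poly_Mapping.single m (Poly_Mapping.lookup f m)) \<in> ideal_gen V F"
    using assms by (rule ideal_gen_sum)
  then show ?thesis
    using poly_mapping_sum_single[of f] by simp
qed

lemma ideal_gen_subset_vanishing_ideal:
  fixes F :: "('x, 'k::comm_ring_1) mpoly set"
  assumes "F \<subseteq> vanishing_ideal V Z"
  shows "ideal_gen V F \<subseteq> vanishing_ideal V Z"
proof
  fix f assume "f \<in> ideal_gen V F"
  then obtain G c where G: "finite G" "G \<subseteq> F" "\<forall>g\<in>G. c g \<in> polys V" "f = (\<Sum>g\<in>G. c g * g)"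
    by (auto simp: ideal_gen_def)
  have gen_poly: "g \<in> polys V" if "g \<in> G" for g
    using G(2) assms that by (auto simp: vanishing_ideal_def)
  have gen_vanish: "mp_eval g a = 0" if "g \<in> G" "a \<in> Z" for g a
    using G(2) assms that by (auto simp: vanishing_ideal_def)
  have "f \<in> polys V"
    unfolding G(4) using G(3) gen_poly by (intro polys_sum polys_mult) auto
  moreover have "mp_eval f a = 0" if "a \<in> Z" for a
    unfolding G(4) using gen_vanish that by (simp add: mp_eval_sum mp_eval_mult)
  ultimately show "f \<in> vanishing_ideal V Z"
    by (simp add: vanishing_ideal_def)
qed

lemma vanishing_ideal_zariski_closure:
  assumes "S \<subseteq> aff_space V"
  shows "vanishing_ideal V (zariski_closure V S) = vanishing_ideal V S"
proof
  show "vanishing_ideal V (zariski_closure V S) \<subseteq> vanishing_ideal V S"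
    using subset_zariski_closure[OF assms] by (auto simp: vanishing_ideal_def)
  show "vanishing_ideal V S \<subseteq> vanishing_ideal V (zariski_closure V S)"
    by (auto simp: vanishing_ideal_def zariski_closure_def zero_set_def)
qed

lemma monomial_mem_ideal_gen_PC_edges:
  fixes m :: "('v \<times> nat) \<Rightarrow>\<^sub>0 nat" and c :: "'k::comm_ring_1"
  assumes irrefl: "\<And>x. \<not> E x x" and E: "E x y" and i: "i \<le> s" and j: "j \<le> s"
    and mx: "(x, i) \<in> Poly_Mapping.keys m" and my: "(y, j) \<in> Poly_Mapping.keys m"
    and km: "Poly_Mapping.keys m \<subseteq> jet_vars s"
  shows "Poly_Mapping.single m c \<in> ideal_gen (jet_vars s) (edge_gens (PC_edges s E))"
proof -
  have xy: "(x, i) \<noteq> (y, j)"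
    using irrefl E by auto
  define e where "e = Poly_Mapping.single (x, i) (1::nat) + Poly_Mapping.single (y, j) 1"
  have "(m - e) + e = m"
    using mx my xy
    by (intro poly_mapping_eqI) (auto simp: e_def lookup_add lookup_minus lookup_single when_def in_keys_iff)
  then have "Poly_Mapping.single m c = Poly_Mapping.single (m - e) c * (mp_xy (x, i) (y, j) :: ('v \<times> nat, 'k) mpoly)"
    by (simp only: mp_xy_def mult_single e_def[symmetric] mult_1_right)
  moreover have "(mp_xy (x, i) (y, j) :: ('v \<times> nat, 'k) mpoly) \<in> edge_gens (PC_edges s E)"
    using E i j by (auto simp: edge_gens_def PC_edges_def)
  moreover have "Poly_Mapping.keys (m - e) \<subseteq> Poly_Mapping.keys m"
    by (auto simp: in_keys_iff lookup_minus)
  then have "Poly_Mapping.single (m - e) c \<in> polys (jet_vars s)"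
    using km by (auto simp: polys_def mp_vars_def)
  ultimately show ?thesis
    by (simp add: mult_mem_ideal_gen)
qed

section \<open>The principal component\<close>

definition smooth_arcs :: "nat \<Rightarrow> ('v \<Rightarrow> 'v \<Rightarrow> bool) \<Rightarrow> ('v \<times> nat \<Rightarrow> 'k::field) set" where
  "smooth_arcs s E = {a \<in> jet_scheme s (edge_gens E). jet_proj a \<in> smooth_locus UNIV (edge_variety E)}"

lemma vanishing_ideal_principal_component:
  "vanishing_ideal (jet_vars s) (principal_component s E) = vanishing_ideal (jet_vars s) (smooth_arcs s E)"
  unfolding principal_component_def Let_def edge_variety_def[symmetric] smooth_arcs_def[symmetric]
  by (rule vanishing_ideal_zariski_closure) (auto simp: smooth_arcs_def jet_scheme_def)

lemma smooth_arc_vanishes_on_PC_edge: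
  fixes a :: "'v::finite \<times> nat \<Rightarrow> 'k::field"
  assumes inf: "infinite (UNIV :: 'k set)"
    and sym: "\<And>x y. E x y \<Longrightarrow> E y x" and irrefl: "\<And>x. \<not> E x x"
    and a: "a \<in> smooth_arcs s E" and E: "E x y" and i: "i \<le> s" and j: "j \<le> s"
  shows "a (x, i) * a (y, j) = 0"
proof -
  have jet: "a \<in> jet_scheme s (edge_gens E)"
    and smooth: "jet_proj a \<in> smooth_locus UNIV (edge_variety E)"
    using a by (auto simp: smooth_arcs_def)
  have "a (v, l) = 0" if v: "v \<in> nbhd E (supp (jet_proj a))" and l: "l \<le> s" for v l
  proof -
    obtain z where "E z v" "a (z, 0) \<noteq> 0"
      using v by (auto simp: nbhd_def supp_def jet_proj_def)
    then show ?thesis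
      using jet_scheme_vanishes_at_neighbour[OF irrefl jet _ _ l] by blast
  qed
  then show ?thesis
    using edge_meets_nbhd_supp_if_smooth[OF inf sym irrefl smooth E] i j by auto
qed

lemma PC_edge_gens_subset_vanishing_ideal:
  fixes E :: "'v::finite \<Rightarrow> 'v \<Rightarrow> bool"
  assumes inf: "infinite (UNIV :: 'k::field set)"
    and sym: "\<And>x y. E x y \<Longrightarrow> E y x" and irrefl: "\<And>x. \<not> E x x"
  shows "edge_gens (PC_edges s E) \<subseteq> vanishing_ideal (jet_vars s) (smooth_arcs s E :: ('v \<times> nat \<Rightarrow> 'k) set)"
proof
  fix g :: "('v \<times> nat, 'k) mpoly"
  assume "g \<in> edge_gens (PC_edges s E)"
  then obtain x i y j where g: "g = mp_xy (x, i) (y, j)" "E x y" "i \<le> s" "j \<le> s"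
    by (auto simp: edge_gens_def PC_edges_def)
  then have xy: "(x, i) \<noteq> (y, j)"
    using irrefl by auto
  show "g \<in> vanishing_ideal (jet_vars s) (smooth_arcs s E)"
    using g smooth_arc_vanishes_on_PC_edge[where E = E, OF inf sym irrefl _ g(2-4)]
    by (auto simp: vanishing_ideal_def polys_def mp_vars_mp_xy[OF xy] jet_vars_def mp_eval_mp_xy[OF xy])
qed

lemma independent_extends_to_maximal:
  fixes E :: "'v::finite \<Rightarrow> 'v \<Rightarrow> bool"
  assumes sym: "\<And>x y. E x y \<Longrightarrow> E y x" and irrefl: "\<And>x. \<not> E x x"
    and indep: "\<And>x y. x \<in> P \<Longrightarrow> y \<in> P \<Longrightarrow> \<not> E x y"
  obtains S where "P \<subseteq> S" "\<And>x y. x \<in> S \<Longrightarrow> y \<in> S \<Longrightarrow> \<not> E x y" "\<And>x. x \<notin> S \<Longrightarrow> \<exists>y\<in>S. E y x"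
proof -
  define Fam where "Fam = {T. P \<subseteq> T \<and> (\<forall>x\<in>T. \<forall>y\<in>T. \<not> E x y)}"
  have "finite Fam" "Fam \<noteq> {}"
    using indep by (auto simp: Fam_def)
  then obtain S where S: "S \<in> Fam" and Smax: "\<And>T. T \<in> Fam \<Longrightarrow> S \<subseteq> T \<Longrightarrow> S = T"
    using finite_has_maximal[of Fam] by blast
  have "\<exists>y\<in>S. E y x" if "x \<notin> S" for x
  proof (rule ccontr)
    assume "\<not> (\<exists>y\<in>S. E y x)"
    then have "insert x S \<in> Fam"
      using S irrefl sym by (auto simp: Fam_def)
    with Smax that show False
      by blast
  qed
  with S that show ?thesis
    by (auto simp: Fam_def)
qed

lemma torus_point_mem_smooth_arcs:
  fixes a :: "'v::finite \<times> nat \<Rightarrow> 'k::field"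
  assumes inf: "infinite (UNIV :: 'k set)"
    and sym: "\<And>x y. E x y \<Longrightarrow> E y x" and irrefl: "\<And>x. \<not> E x x"
    and indep: "\<And>x y. x \<in> S \<Longrightarrow> y \<in> S \<Longrightarrow> \<not> E x y"
    and maximal: "\<And>x. x \<notin> S \<Longrightarrow> \<exists>y\<in>S. E y x"
    and outside: "\<And>z. z \<notin> S \<times> {..s} \<Longrightarrow> a z = 0"
    and inside: "\<And>z. z \<in> S \<times> {..s} \<Longrightarrow> a z \<noteq> 0"
  shows "a \<in> smooth_arcs s E"
proof -
  have arc0: "jet_arc s a v = 0" if "v \<notin> S" for v
    unfolding jet_arc_def using outside that by (auto intro!: sum.neutral)
  have "a \<in> jet_scheme s (edge_gens E)"
    unfolding jet_scheme_def
  proof (intro CollectI conjI ballI allI impI)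
    show "a \<in> aff_space (jet_vars s)"
      using outside by (auto simp: aff_space_def jet_vars_def)
    fix g :: "('v, 'k) mpoly" and l
    assume "g \<in> edge_gens E"
    then obtain x y where g: "g = mp_xy x y" "E x y"
      by (auto simp: edge_gens_def)
    then have "x \<noteq> y" "x \<notin> S \<or> y \<notin> S"
      using irrefl indep by auto
    then show "coeff (mp_eval_with (\<lambda>c. [:c:]) g (jet_arc s a)) l = 0"
      using arc0 by (auto simp: g mp_eval_with_mp_xy)
  qed
  moreover have "supp (jet_proj a) = S"
    using outside inside by (auto simp: supp_def jet_proj_def)
  then have "jet_proj a \<in> smooth_locus UNIV (edge_variety E)"
    using smooth_if_supp_maximal_independent[OF inf sym irrefl _ indep maximal] by blast
  ultimately show ?thesis
    by (simp add: smooth_arcs_def)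
qed

text \<open>If the variables of a monomial \<open>m\<close> of \<open>f\<close> spanned no edge of \<open>PC\<^sub>s(G)\<close>, the underlying
  vertices would form an independent set, contained in a maximal one \<open>S\<close>. All points of the torus
  of \<open>S \<times> {0..s}\<close> are smooth arcs, and a polynomial vanishing there has no monomial in these
  variables.\<close>

lemma monomial_contains_PC_edge:
  fixes E :: "'v::finite \<Rightarrow> 'v \<Rightarrow> bool" and f :: "('v \<times> nat, 'k::field) mpoly"
  assumes inf: "infinite (UNIV :: 'k set)"
    and sym: "\<And>x y. E x y \<Longrightarrow> E y x" and irrefl: "\<And>x. \<not> E x x"
    and f: "f \<in> vanishing_ideal (jet_vars s) (smooth_arcs s E)" and m: "m \<in> Poly_Mapping.keys f"
  shows "\<exists>x i y j. E x y \<and> i \<le> s \<and> j \<le> s \<and> (x, i) \<in> Poly_Mapping.keys m \<and> (y, j) \<in> Poly_Mapping.keys m"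
proof (rule ccontr)
  assume no_edge: "\<not> ?thesis"
  define P where "P = {v. \<exists>l. (v, l) \<in> Poly_Mapping.keys m}"
  have level: "l \<le> s" if "(v, l) \<in> Poly_Mapping.keys m" for v l
    using f m that by (auto simp: vanishing_ideal_def polys_def mp_vars_def jet_vars_def)
  have "\<not> E x y" if xy: "x \<in> P" "y \<in> P" for x y
  proof -
    obtain l l' where "(x, l) \<in> Poly_Mapping.keys m" "(y, l') \<in> Poly_Mapping.keys m"
      using xy by (auto simp: P_def)
    then show ?thesis
      using no_edge level[of x l] level[of y l'] by blast
  qed
  then obtain S where PS: "P \<subseteq> S" and indep: "\<And>x y. x \<in> S \<Longrightarrow> y \<in> S \<Longrightarrow> \<not> E x y"
      and maximal: "\<And>x. x \<notin> S \<Longrightarrow> \<exists>y\<in>S. E y x"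
    using independent_extends_to_maximal[of E P, OF sym irrefl] by blast
  have "\<not> Poly_Mapping.keys m \<subseteq> S \<times> {..s}"
  proof (rule monomial_not_within_if_vanishes_on_torus[OF inf _ _ m])
    fix a :: "'v \<times> nat \<Rightarrow> 'k"
    assume outside: "\<And>z. z \<notin> S \<times> {..s} \<Longrightarrow> a z = 0"
      and inside: "\<And>z. z \<in> S \<times> {..s} \<Longrightarrow> a z \<noteq> 0"
    have "a \<in> smooth_arcs s E"
      using torus_point_mem_smooth_arcs[where E = E, OF inf sym irrefl indep maximal outside inside] .
    then show "mp_eval f a = 0"
      using f by (simp add: vanishing_ideal_def)
  qed simp
  moreover have "Poly_Mapping.keys m \<subseteq> S \<times> {..s}"
    using PS level by (auto simp: P_def)
  ultimately show False
    by contradiction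
qed

lemma vanishing_ideal_smooth_arcs_subset_ideal_gen:
  fixes E :: "'v::finite \<Rightarrow> 'v \<Rightarrow> bool"
  assumes inf: "infinite (UNIV :: 'k::field set)"
    and sym: "\<And>x y. E x y \<Longrightarrow> E y x" and irrefl: "\<And>x. \<not> E x x"
  shows "vanishing_ideal (jet_vars s) (smooth_arcs s E :: ('v \<times> nat \<Rightarrow> 'k) set)
      \<subseteq> ideal_gen (jet_vars s) (edge_gens (PC_edges s E))"
proof
  fix f assume f: "f \<in> vanishing_ideal (jet_vars s) (smooth_arcs s E :: ('v \<times> nat \<Rightarrow> 'k) set)"
  show "f \<in> ideal_gen (jet_vars s) (edge_gens (PC_edges s E))"
  proof (rule mem_ideal_gen_if_monomials)
    fix m assume m: "m \<in> Poly_Mapping.keys f"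
    then have "Poly_Mapping.keys m \<subseteq> jet_vars s"
      using f by (auto simp: vanishing_ideal_def polys_def mp_vars_def)
    moreover obtain x i y j where "E x y" "i \<le> s" "j \<le> s"
        "(x, i) \<in> Poly_Mapping.keys m" "(y, j) \<in> Poly_Mapping.keys m"
      using monomial_contains_PC_edge[where E = E, OF inf sym irrefl f m] by blast
    ultimately show "Poly_Mapping.single m (Poly_Mapping.lookup f m)
        \<in> ideal_gen (jet_vars s) (edge_gens (PC_edges s E))"
      by (intro monomial_mem_ideal_gen_PC_edges[where E = E, OF irrefl])
  qed
qed

theorem mainTheorem8:
  fixes E :: "'v::finite \<Rightarrow> 'v \<Rightarrow> bool" and s :: nat
  assumes sym: "\<And>x y. E x y \<Longrightarrow> E y x"
    and irrefl: "\<And>x. \<not> E x x"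
    and connected: "\<And>x y. E\<^sup>*\<^sup>* x y"
    and has_edge: "\<exists>x y. E x y"
  shows "vanishing_ideal (jet_vars s) (principal_component s E :: ('v \<times> nat \<Rightarrow> 'k::alg_closed_field) set)
         = ideal_gen (jet_vars s) (edge_gens (PC_edges s E))"
proof -
  have inf: "infinite (UNIV :: 'k set)"
    by (rule infinite_UNIV_alg_closed_field)
  have "ideal_gen (jet_vars s) (edge_gens (PC_edges s E))
      \<subseteq> vanishing_ideal (jet_vars s) (smooth_arcs s E :: ('v \<times> nat \<Rightarrow> 'k) set)"
    by (rule ideal_gen_subset_vanishing_ideal[OF PC_edge_gens_subset_vanishing_ideal[where E = E, OF inf sym irrefl]])
  with vanishing_ideal_smooth_arcs_subset_ideal_gen[where E = E, OF inf sym irrefl] show ?thesis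
    unfolding vanishing_ideal_principal_component by blast
qed

end
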